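(* Let $K$ be a field which is an $\mathscr A$-algebra, $\zeta$ the image of $q$, and suppose $m\ge n\ge2$. Then $\operatorname{Ann}_{\mathfrak B_n(-\zeta^{2m+1},\zeta)}(V_K^{\otimes n})\subseteq B^{(1)}$, where $\operatorname{Ann}$ denotes the set of $x\in\mathfrak B_n(-\zeta^{2m+1},\zeta)$ with $vx=0$ for all $v\in V_K^{\otimes n}$.
   Context: Let $q$ be an indeterminate, $\mathscr A=\mathbb Z[q,q^{-1}]$. $\mathfrak B_n(-q^{2m+1},q)_{\mathscr A}$ is the unital $\mathscr A$-algebra generated by invertible $T_i$ and $E_i$ ($1\le i\le n-1$) with relations $T_i-T_i^{-1}=z(1-E_i)$; $E_i^2=xE_i$; $T_iT_{i+1}T_i=T_{i+1}T_iT_{i+1}$; $T_iT_j=T_jT_i$ ($|i-j|>1$); $E_iE_{i+1}E_i=E_i$, $E_{i+1}E_iE_{i+1}=E_{i+1}$; $T_iT_{i+1}E_i=E_{i+1}E_i$, $T_{i+1}T_iE_{i+1}=E_iE_{i+1}$; $E_iT_i=T_iE_i=r^{-1}E_i$; $E_iT_{i+1}E_i=rE_i$, $E_{i+1}T_iE_{i+1}=rE_{i+1}$; with $r=-q^{2m+1}$, $z=q-q^{-1}$, $x=1-\sum_{i=-m}^mq^{2i}$; $\mathfrak B_n(-\zeta^{2m+1},\zeta)=\mathfrak B_n(-q^{2m+1},q)_{\mathscr A}\otimes_{\mathscr A}K$. $V_K$ has basis $v_1,\dots,v_{2m}$, $i'=2m+1-i$, $\rho=(m,\dots,1,-1,\dots,-m)$,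 $\epsilon_i=\operatorname{sign}\rho_i$, $M_{i,j}v_k=\delta_{jk}v_i$; $\beta'=\sum_i(qM_{i,i}\otimes M_{i,i}+q^{-1}M_{i,i'}\otimes M_{i',i})+\sum_{i\ne j,j'}M_{i,j}\otimes M_{j,i}+(q-q^{-1})\sum_{i<j}(M_{i,i}\otimes M_{j,j}-q^{\rho_j-\rho_i}\epsilon_i\epsilon_jM_{i,j'}\otimes M_{i',j})$, $\gamma'=\sum_{i,j}q^{\rho_j-\rho_i}\epsilon_i\epsilon_jM_{i,j'}\otimes M_{i',j}$ (with $q$ specialized to $\zeta$); the right action of $\mathfrak B_n(-\zeta^{2m+1},\zeta)$ on $V_K^{\otimes n}$ is given by $T_i$ acting as $\beta'$ and $E_i$ as $\gamma'$ on tensor positions $i,i+1$. $B^{(1)}$ is the two-sided ideal of $\mathfrak B_n(-\zeta^{2m+1},\zeta)$ generated by $E_1$. *)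

theory Defs
  imports Main
begin

datatype gen = T nat | Tinv nat | E nat

fun gidx :: "gen \<Rightarrow> nat" where
  "gidx (T i) = i" | "gidx (Tinv i) = i" | "gidx (E i) = i"

datatype 'k bexp = Sc 'k | G gen | Add "'k bexp" "'k bexp" | Mul "'k bexp" "'k bexp"

fun wf_bexp :: "nat \<Rightarrow> 'k bexp \<Rightarrow> bool" where
  "wf_bexp n (Sc c) = True"
| "wf_bexp n (G g) = (1 \<le> gidx g \<and> gidx g \<le> n - 1)"
| "wf_bexp n (Add a b) = (wf_bexp n a \<and> wf_bexp n b)"
| "wf_bexp n (Mul a b) = (wf_bexp n a \<and> wf_bexp n b)"

abbreviation Sub :: "'k::field bexp \<Rightarrow> 'k bexp \<Rightarrow> 'k bexp" where
  "Sub a b \<equiv> Add a (Mul (Sc (-1)) b)"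

definition par_r :: "nat \<Rightarrow> 'k::field \<Rightarrow> 'k" where
  "par_r m \<zeta> = - (\<zeta> ^ (2*m+1))"

definition par_z :: "'k::field \<Rightarrow> 'k" where
  "par_z \<zeta> = \<zeta> - inverse \<zeta>"

definition par_x :: "nat \<Rightarrow> 'k::field \<Rightarrow> 'k" where
  "par_x m \<zeta> = 1 - (\<Sum>i\<in>{-int m..int m}. \<zeta> powi (2*i))"

section \<open>The BMW algebra B_n(-zeta^(2m+1), zeta) over K, as the congruence on
  expressions generated by the unital associative K-algebra axioms and the defining relations\<close>

inductive bmw_eq :: "nat \<Rightarrow> nat \<Rightarrow> 'k::field \<Rightarrow> 'k bexp \<Rightarrow> 'k bexp \<Rightarrow> bool"
  for n m \<zeta> where
  refl: "bmw_eq n m \<zeta> a a"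
| sym: "bmw_eq n m \<zeta> a b \<Longrightarrow> bmw_eq n m \<zeta> b a"
| trans: "bmw_eq n m \<zeta> a b \<Longrightarrow> bmw_eq n m \<zeta> b c \<Longrightarrow> bmw_eq n m \<zeta> a c"
| cong_add: "bmw_eq n m \<zeta> a a' \<Longrightarrow> bmw_eq n m \<zeta> b b' \<Longrightarrow> bmw_eq n m \<zeta> (Add a b) (Add a' b')"
| cong_mul: "bmw_eq n m \<zeta> a a' \<Longrightarrow> bmw_eq n m \<zeta> b b' \<Longrightarrow> bmw_eq n m \<zeta> (Mul a b) (Mul a' b')"
| add_assoc: "bmw_eq n m \<zeta> (Add (Add a b) c) (Add a (Add b c))"
| add_comm: "bmw_eq n m \<zeta> (Add a b) (Add b a)"
| add_zero: "bmw_eq n m \<zeta> (Add (Sc 0) a) a"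
| add_neg: "bmw_eq n m \<zeta> (Sub a a) (Sc 0)"
| mul_assoc: "bmw_eq n m \<zeta> (Mul (Mul a b) c) (Mul a (Mul b c))"
| mul_one_l: "bmw_eq n m \<zeta> (Mul (Sc 1) a) a"
| mul_one_r: "bmw_eq n m \<zeta> (Mul a (Sc 1)) a"
| distrib_l: "bmw_eq n m \<zeta> (Mul a (Add b c)) (Add (Mul a b) (Mul a c))"
| distrib_r: "bmw_eq n m \<zeta> (Mul (Add a b) c) (Add (Mul a c) (Mul b c))"
| sc_add: "bmw_eq n m \<zeta> (Add (Sc c) (Sc d)) (Sc (c + d))"
| sc_mul: "bmw_eq n m \<zeta> (Mul (Sc c) (Sc d)) (Sc (c * d))"
| sc_central: "bmw_eq n m \<zeta> (Mul (Sc c) a) (Mul a (Sc c))"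
| inv_l: "1 \<le> i \<Longrightarrow> i \<le> n - 1 \<Longrightarrow> bmw_eq n m \<zeta> (Mul (G (T i)) (G (Tinv i))) (Sc 1)"
| inv_r: "1 \<le> i \<Longrightarrow> i \<le> n - 1 \<Longrightarrow> bmw_eq n m \<zeta> (Mul (G (Tinv i)) (G (T i))) (Sc 1)"
| skein: "1 \<le> i \<Longrightarrow> i \<le> n - 1 \<Longrightarrow>
    bmw_eq n m \<zeta> (Sub (G (T i)) (G (Tinv i))) (Mul (Sc (par_z \<zeta>)) (Sub (Sc 1) (G (E i))))"
| E_sq: "1 \<le> i \<Longrightarrow> i \<le> n - 1 \<Longrightarrow>
    bmw_eq n m \<zeta> (Mul (G (E i)) (G (E i))) (Mul (Sc (par_x m \<zeta>)) (G (E i)))"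
| braid: "1 \<le> i \<Longrightarrow> i + 1 \<le> n - 1 \<Longrightarrow>
    bmw_eq n m \<zeta> (Mul (Mul (G (T i)) (G (T (i+1)))) (G (T i)))
                   (Mul (Mul (G (T (i+1))) (G (T i))) (G (T (i+1))))"
| far_comm: "1 \<le> i \<Longrightarrow> i \<le> n - 1 \<Longrightarrow> 1 \<le> j \<Longrightarrow> j \<le> n - 1 \<Longrightarrow> i + 1 < j \<or> j + 1 < i \<Longrightarrow>
    bmw_eq n m \<zeta> (Mul (G (T i)) (G (T j))) (Mul (G (T j)) (G (T i)))"
| EEE1: "1 \<le> i \<Longrightarrow> i + 1 \<le> n - 1 \<Longrightarrow>
    bmw_eq n m \<zeta> (Mul (Mul (G (E i)) (G (E (i+1)))) (G (E i))) (G (E i))"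
| EEE2: "1 \<le> i \<Longrightarrow> i + 1 \<le> n - 1 \<Longrightarrow>
    bmw_eq n m \<zeta> (Mul (Mul (G (E (i+1))) (G (E i))) (G (E (i+1)))) (G (E (i+1)))"
| TTE1: "1 \<le> i \<Longrightarrow> i + 1 \<le> n - 1 \<Longrightarrow>
    bmw_eq n m \<zeta> (Mul (Mul (G (T i)) (G (T (i+1)))) (G (E i))) (Mul (G (E (i+1))) (G (E i)))"
| TTE2: "1 \<le> i \<Longrightarrow> i + 1 \<le> n - 1 \<Longrightarrow>
    bmw_eq n m \<zeta> (Mul (Mul (G (T (i+1))) (G (T i))) (G (E (i+1)))) (Mul (G (E i)) (G (E (i+1))))"
| ET: "1 \<le> i \<Longrightarrow> i \<le> n - 1 \<Longrightarrow>
    bmw_eq n m \<zeta> (Mul (G (E i)) (G (T i))) (Mul (Sc (inverse (par_r m \<zeta>))) (G (E i)))"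
| TE: "1 \<le> i \<Longrightarrow> i \<le> n - 1 \<Longrightarrow>
    bmw_eq n m \<zeta> (Mul (G (T i)) (G (E i))) (Mul (Sc (inverse (par_r m \<zeta>))) (G (E i)))"
| ETE1: "1 \<le> i \<Longrightarrow> i + 1 \<le> n - 1 \<Longrightarrow>
    bmw_eq n m \<zeta> (Mul (Mul (G (E i)) (G (T (i+1)))) (G (E i))) (Mul (Sc (par_r m \<zeta>)) (G (E i)))"
| ETE2: "1 \<le> i \<Longrightarrow> i + 1 \<le> n - 1 \<Longrightarrow>
    bmw_eq n m \<zeta> (Mul (Mul (G (E (i+1))) (G (T i))) (G (E (i+1)))) (Mul (Sc (par_r m \<zeta>)) (G (E (i+1))))"

section \<open>The two-sided ideal B^(1) generated by E_1 (as a set of expressions, closed under bmw_eq)\<close>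

inductive inB1 :: "nat \<Rightarrow> nat \<Rightarrow> 'k::field \<Rightarrow> 'k bexp \<Rightarrow> bool" for n m \<zeta> where
  gen: "wf_bexp n a \<Longrightarrow> wf_bexp n b \<Longrightarrow> inB1 n m \<zeta> (Mul (Mul a (G (E 1))) b)"
| add: "inB1 n m \<zeta> a \<Longrightarrow> inB1 n m \<zeta> b \<Longrightarrow> inB1 n m \<zeta> (Add a b)"
| resp: "inB1 n m \<zeta> a \<Longrightarrow> bmw_eq n m \<zeta> a b \<Longrightarrow> inB1 n m \<zeta> b"

(* basis vectors v_{w_1} \<otimes> ... \<otimes> v_{w_n}, indexed by words w of length n over {1..2m} *)
definition tbasis :: "nat \<Rightarrow> nat \<Rightarrow> nat list set" where
  "tbasis n m = {w. length w = n \<and> set w \<subseteq> {1..2*m}}"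

definition is_tvec :: "nat \<Rightarrow> nat \<Rightarrow> (nat list \<Rightarrow> 'k::zero) \<Rightarrow> bool" where
  "is_tvec n m v \<longleftrightarrow> (\<forall>w. w \<notin> tbasis n m \<longrightarrow> v w = 0)"

definition pr :: "nat \<Rightarrow> nat \<Rightarrow> nat" where
  "pr m i = 2*m + 1 - i"

definition rho :: "nat \<Rightarrow> nat \<Rightarrow> int" where  (* rho = (m,...,1,-1,...,-m) *)
  "rho m i = (if i \<le> m then int m + 1 - int i else int m - int i)"

definition eps :: "nat \<Rightarrow> nat \<Rightarrow> 'k::field" where
  "eps m i = (if i \<le> m then 1 else -1)"

(* matrix coefficient of beta': coefficient of v_c \<otimes> v_d in beta'(v_a \<otimes> v_b) *)
definition beta_c :: "nat \<Rightarrow> 'k::field \<Rightarrow> nat \<Rightarrow> nat \<Rightarrow> nat \<Rightarrow> nat \<Rightarrow> 'k" where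
  "beta_c m \<zeta> c d a b =
     (if c = d \<and> a = c \<and> b = c then \<zeta> else 0)
   + (if d = pr m c \<and> a = pr m c \<and> b = c then inverse \<zeta> else 0)
   + (if c \<noteq> d \<and> c \<noteq> pr m d \<and> a = d \<and> b = c then 1 else 0)
   + par_z \<zeta> * ((if c < d \<and> a = c \<and> b = d then 1 else 0)
       - (if c < b \<and> d = pr m c \<and> a = pr m b
          then \<zeta> powi (rho m b - rho m c) * eps m c * eps m b else 0))"

definition gamma_c :: "nat \<Rightarrow> 'k::field \<Rightarrow> nat \<Rightarrow> nat \<Rightarrow> nat \<Rightarrow> nat \<Rightarrow> 'k" where
  "gamma_c m \<zeta> c d a b =
     (if d = pr m c \<and> a = pr m b then \<zeta> powi (rho m b - rho m c) * eps m c * eps m b else 0)"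

(* operator with coefficients C acting on tensor positions i, i+1 (1-indexed) *)
definition two_site :: "nat \<Rightarrow> nat \<Rightarrow> (nat \<Rightarrow> nat \<Rightarrow> nat \<Rightarrow> nat \<Rightarrow> 'k::field) \<Rightarrow> nat
    \<Rightarrow> (nat list \<Rightarrow> 'k) \<Rightarrow> (nat list \<Rightarrow> 'k)" where
  "two_site n m C i v w =
     (if w \<in> tbasis n m then
        (\<Sum>a\<in>{1..2*m}. \<Sum>b\<in>{1..2*m}. C (w!(i-1)) (w!i) a b * v (w[i-1 := a, i := b]))
      else 0)"

(* right action  v \<mapsto> v\<cdot>g  of a generator; T_i^{-1} acts as beta' - z(1 - gamma'),
   which is forced by the relation T_i - T_i^{-1} = z(1 - E_i) *)
fun gen_act :: "nat \<Rightarrow> nat \<Rightarrow> 'k::field \<Rightarrow> gen \<Rightarrow> (nat list \<Rightarrow> 'k) \<Rightarrow> (nat list \<Rightarrow> 'k)" where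
  "gen_act n m \<zeta> (T i) v = two_site n m (beta_c m \<zeta>) i v"
| "gen_act n m \<zeta> (E i) v = two_site n m (gamma_c m \<zeta>) i v"
| "gen_act n m \<zeta> (Tinv i) v =
     (\<lambda>w. two_site n m (beta_c m \<zeta>) i v w - par_z \<zeta> * (v w - two_site n m (gamma_c m \<zeta>) i v w))"

(* right action v \<mapsto> v\<cdot>x of an algebra element; v\<cdot>(xy) = (v\<cdot>x)\<cdot>y *)
fun act :: "nat \<Rightarrow> nat \<Rightarrow> 'k::field \<Rightarrow> 'k bexp \<Rightarrow> (nat list \<Rightarrow> 'k) \<Rightarrow> (nat list \<Rightarrow> 'k)" where
  "act n m \<zeta> (Sc c) v = (\<lambda>w. c * v w)"
| "act n m \<zeta> (G g) v = gen_act n m \<zeta> g v"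
| "act n m \<zeta> (Add a b) v = (\<lambda>w. act n m \<zeta> a v w + act n m \<zeta> b v w)"
| "act n m \<zeta> (Mul a b) v = act n m \<zeta> b (act n m \<zeta> a v)"

definition in_Ann :: "nat \<Rightarrow> nat \<Rightarrow> 'k::field \<Rightarrow> 'k bexp \<Rightarrow> bool" where
  "in_Ann n m \<zeta> x \<longleftrightarrow> (\<forall>v. is_tvec n m v \<longrightarrow> act n m \<zeta> x v = (\<lambda>w. 0))"

end

theory Submission
  imports Defs
begin

text \<open>Modulo \<open>B\<^sup>(\<^sup>1\<^sup>)\<close> every \<open>E\<^sub>i\<close> vanishes, \<open>T\<^sub>i\<^sup>-\<^sup>1 = T\<^sub>i - z\<close>, and the \<open>T\<^sub>i\<close> satisfy the
  relations of the Hecke algebra of the symmetric group. Hence the quotient of \<open>B\<^sub>n\<close> by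
  \<open>B\<^sup>(\<^sup>1\<^sup>)\<close> is spanned by the \<open>n!\<close> elements \<open>T\<^sub>w\<close>, \<open>w\<close> running through the reduced words
  attached to Lehmer codes. Conversely, for \<open>m \<ge> n\<close> the vectors supported on tensor words with \<open>n\<close> distinct letters
  from \<open>{1..m}\<close> are stable under the action; there \<open>E\<^sub>i\<close> acts as zero and \<open>T\<^sub>i\<close> as the
  Hecke operator permuting two positions. Applied to \<open>v\<^sub>1 \<otimes> \<cdots> \<otimes> v\<^sub>n\<close>, the \<open>T\<^sub>w\<close> give
  vectors that are unitriangular with respect to the number of inversions, with pairwise
  distinct leading words, hence linearly independent. So an annihilating element, written
  modulo \<open>B\<^sup>(\<^sup>1\<^sup>)\<close> as a combination of the \<open>T\<^sub>w\<close>, has all coefficients zero.\<close>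

section \<open>The defining congruence and the ideal \<open>B\<^sup>(\<^sup>1\<^sup>)\<close>\<close>

locale bmw_quotient =
  fixes n m :: nat and \<zeta> :: "'k::field"
begin

abbreviation bmw_equiv :: "'k bexp \<Rightarrow> 'k bexp \<Rightarrow> bool" (infix "\<approx>" 50)
  where "a \<approx> b \<equiv> bmw_eq n m \<zeta> a b"

abbreviation in_B1 :: "'k bexp \<Rightarrow> bool" where
  "in_B1 \<equiv> inB1 n m \<zeta>"

abbreviation zpar :: 'k where
  "zpar \<equiv> par_z \<zeta>"

lemma bmw_trans [trans]: "a \<approx> b \<Longrightarrow> b \<approx> c \<Longrightarrow> a \<approx> c"
  by (rule bmw_eq.trans)

lemmas bmw_refl = bmw_eq.refl and bmw_sym = bmw_eq.sym

lemma Mul_cong_left: "a \<approx> a' \<Longrightarrow> Mul a b \<approx> Mul a' b"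
  by (rule bmw_eq.cong_mul, assumption, rule bmw_refl)

lemma Mul_cong_right: "b \<approx> b' \<Longrightarrow> Mul a b \<approx> Mul a b'"
  by (rule bmw_eq.cong_mul, rule bmw_refl, assumption)

lemma Add_cong_left: "a \<approx> a' \<Longrightarrow> Add a b \<approx> Add a' b"
  by (rule bmw_eq.cong_add, assumption, rule bmw_refl)

lemma Add_cong_right: "b \<approx> b' \<Longrightarrow> Add a b \<approx> Add a b'"
  by (rule bmw_eq.cong_add, rule bmw_refl, assumption)

lemma Add_zero_right: "Add a (Sc 0) \<approx> a"
  by (rule bmw_trans, rule bmw_eq.add_comm, rule bmw_eq.add_zero)

lemma Add_scalars_Mul: "Add (Mul (Sc c) a) (Mul (Sc d) a) \<approx> Mul (Sc (c + d)) a"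
  by (rule bmw_trans, rule bmw_sym, rule bmw_eq.distrib_r, rule Mul_cong_left, rule bmw_eq.sc_add)

lemma Mul_zero_left: "Mul (Sc 0) a \<approx> Sc 0"
proof -
  have "Mul (Sc 0) a \<approx> Add (Mul (Sc 1) a) (Mul (Sc (-1)) a)"
    using Add_scalars_Mul[of 1 a "-1"] by (simp add: bmw_sym)
  also have "\<dots> \<approx> Sub a a"
    by (rule Add_cong_left, rule bmw_eq.mul_one_l)
  also have "\<dots> \<approx> Sc 0"
    by (rule bmw_eq.add_neg)
  finally show ?thesis .
qed

lemma Mul_zero_right: "Mul a (Sc 0) \<approx> Sc 0"
  by (rule bmw_trans, rule bmw_sym, rule bmw_eq.sc_central, rule Mul_zero_left)

lemma Mul_Sc_Sc: "Mul (Sc c) (Mul (Sc d) a) \<approx> Mul (Sc (c * d)) a"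
  by (rule bmw_trans, rule bmw_sym, rule bmw_eq.mul_assoc, rule Mul_cong_left, rule bmw_eq.sc_mul)

lemma Add_interchange: "Add (Add a b) (Add c d) \<approx> Add (Add a c) (Add b d)"
proof -
  have "Add (Add a b) (Add c d) \<approx> Add a (Add (Add b c) d)"
    by (rule bmw_trans, rule bmw_eq.add_assoc, rule Add_cong_right, rule bmw_sym, rule bmw_eq.add_assoc)
  also have "\<dots> \<approx> Add a (Add c (Add b d))"
    by (rule Add_cong_right, rule bmw_trans, rule Add_cong_left, rule bmw_eq.add_comm, rule bmw_eq.add_assoc)
  also have "\<dots> \<approx> Add (Add a c) (Add b d)"
    by (rule bmw_sym, rule bmw_eq.add_assoc)
  finally show ?thesis .
qed

lemma in_B1_Mul_right: "in_B1 b \<Longrightarrow> wf_bexp n t \<Longrightarrow> in_B1 (Mul b t)"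
proof (induction rule: inB1.induct)
  case (gen a b)
  have "in_B1 (Mul (Mul a (G (E 1))) (Mul b t))"
    by (rule inB1.gen) (use gen in auto)
  then show ?case
    by (rule inB1.resp) (rule bmw_sym, rule bmw_eq.mul_assoc)
next
  case (add a b)
  then have "in_B1 (Add (Mul a t) (Mul b t))"
    by (intro inB1.add) auto
  then show ?case
    by (rule inB1.resp) (rule bmw_sym, rule bmw_eq.distrib_r)
next
  case (resp a b)
  then show ?case
    by (blast intro: inB1.resp Mul_cong_left)
qed

lemma in_B1_Mul_left: "in_B1 b \<Longrightarrow> wf_bexp n t \<Longrightarrow> in_B1 (Mul t b)"
proof (induction rule: inB1.induct)
  case (gen a b)
  have "in_B1 (Mul (Mul (Mul t a) (G (E 1))) b)"
    by (rule inB1.gen) (use gen in auto)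
  then show ?case
    by (rule inB1.resp) (rule bmw_trans, rule Mul_cong_left, rule bmw_eq.mul_assoc, rule bmw_eq.mul_assoc)
next
  case (add a b)
  then have "in_B1 (Add (Mul t a) (Mul t b))"
    by (intro inB1.add) auto
  then show ?case
    by (rule inB1.resp) (rule bmw_sym, rule bmw_eq.distrib_l)
next
  case (resp a b)
  then show ?case
    by (blast intro: inB1.resp Mul_cong_right)
qed

lemma in_B1_zero: "in_B1 (Sc 0)"
proof -
  have "in_B1 (Mul (Mul (Sc 0) (G (E 1))) (Sc 1))"
    by (rule inB1.gen) auto
  then show ?thesis
    by (rule inB1.resp) (rule bmw_trans, rule bmw_eq.mul_one_r, rule Mul_zero_left)
qed

definition cong_B1 :: "'k bexp \<Rightarrow> 'k bexp \<Rightarrow> bool" (infix "\<simeq>" 50) where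
  "a \<simeq> b \<longleftrightarrow> (\<exists>c. in_B1 c \<and> a \<approx> Add b c)"

lemma cong_B1_if_bmw: "a \<approx> b \<Longrightarrow> a \<simeq> b"
  unfolding cong_B1_def
  by (blast intro: in_B1_zero bmw_trans bmw_sym[OF Add_zero_right])

lemma cong_B1_refl: "a \<simeq> a"
  by (rule cong_B1_if_bmw, rule bmw_refl)

lemma cong_B1_trans [trans]: "a \<simeq> b \<Longrightarrow> b \<simeq> c \<Longrightarrow> a \<simeq> c"
proof -
  assume "a \<simeq> b" "b \<simeq> c"
  then obtain d e where d: "in_B1 d" "a \<approx> Add b d" and e: "in_B1 e" "b \<approx> Add c e"
    unfolding cong_B1_def by blast
  have "a \<approx> Add (Add c e) d"
    by (rule bmw_trans, rule d(2), rule Add_cong_left, rule e(2))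
  also have "\<dots> \<approx> Add c (Add e d)"
    by (rule bmw_eq.add_assoc)
  finally show "a \<simeq> c"
    unfolding cong_B1_def using d e by (blast intro: inB1.add)
qed

lemma cong_B1_bmw_trans [trans]: "a \<simeq> b \<Longrightarrow> b \<approx> c \<Longrightarrow> a \<simeq> c"
  by (rule cong_B1_trans, assumption, rule cong_B1_if_bmw)

lemma bmw_cong_B1_trans [trans]: "a \<approx> b \<Longrightarrow> b \<simeq> c \<Longrightarrow> a \<simeq> c"
  by (rule cong_B1_trans, rule cong_B1_if_bmw)

lemma cong_B1_sym: "a \<simeq> b \<Longrightarrow> b \<simeq> a"
proof -
  assume "a \<simeq> b"
  then obtain c where c: "in_B1 c" "a \<approx> Add b c"
    unfolding cong_B1_def by blast
  have "Add a (Mul (Sc (-1)) c) \<approx> Add (Add b c) (Mul (Sc (-1)) c)"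
    by (rule Add_cong_left, fact)
  also have "\<dots> \<approx> Add b (Sub c c)"
    by (rule bmw_eq.add_assoc)
  also have "\<dots> \<approx> b"
    by (rule bmw_trans, rule Add_cong_right, rule bmw_eq.add_neg, rule Add_zero_right)
  finally have "b \<approx> Add a (Mul (Sc (-1)) c)"
    by (rule bmw_sym)
  moreover have "in_B1 (Mul (Sc (-1)) c)"
    by (rule in_B1_Mul_left) (use c in auto)
  ultimately show "b \<simeq> a"
    unfolding cong_B1_def by blast
qed

lemma cong_B1_Add: "a \<simeq> b \<Longrightarrow> a' \<simeq> b' \<Longrightarrow> Add a a' \<simeq> Add b b'"
proof -
  assume "a \<simeq> b" "a' \<simeq> b'"
  then obtain c c' where c: "in_B1 c" "a \<approx> Add b c" and c': "in_B1 c'" "a' \<approx> Add b' c'"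
    unfolding cong_B1_def by blast
  have "Add a a' \<approx> Add (Add b b') (Add c c')"
    by (rule bmw_trans, rule bmw_eq.cong_add, fact, fact, rule Add_interchange)
  then show ?thesis
    unfolding cong_B1_def using c c' by (blast intro: inB1.add)
qed

lemma cong_B1_Mul_right: "a \<simeq> b \<Longrightarrow> wf_bexp n t \<Longrightarrow> Mul a t \<simeq> Mul b t"
proof -
  assume "a \<simeq> b" and t: "wf_bexp n t"
  then obtain c where c: "in_B1 c" "a \<approx> Add b c"
    unfolding cong_B1_def by blast
  have "Mul a t \<approx> Add (Mul b t) (Mul c t)"
    by (rule bmw_trans, rule Mul_cong_left, fact, rule bmw_eq.distrib_r)
  then show ?thesis
    unfolding cong_B1_def using c t by (blast intro: in_B1_Mul_right)
qed

lemma cong_B1_Mul_left: "a \<simeq> b \<Longrightarrow> wf_bexp n t \<Longrightarrow> Mul t a \<simeq> Mul t b"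
proof -
  assume "a \<simeq> b" and t: "wf_bexp n t"
  then obtain c where c: "in_B1 c" "a \<approx> Add b c"
    unfolding cong_B1_def by blast
  have "Mul t a \<approx> Add (Mul t b) (Mul t c)"
    by (rule bmw_trans, rule Mul_cong_right, fact, rule bmw_eq.distrib_l)
  then show ?thesis
    unfolding cong_B1_def using c t by (blast intro: in_B1_Mul_left)
qed

lemma cong_B1_zero_iff: "a \<simeq> Sc 0 \<longleftrightarrow> in_B1 a"
proof
  assume "a \<simeq> Sc 0"
  then show "in_B1 a"
    unfolding cong_B1_def by (blast intro: inB1.resp bmw_sym bmw_trans bmw_eq.add_zero)
next
  assume "in_B1 a"
  then show "a \<simeq> Sc 0"
    unfolding cong_B1_def by (blast intro: bmw_sym bmw_eq.add_zero)
qed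

section \<open>The Hecke relations modulo \<open>B\<^sup>(\<^sup>1\<^sup>)\<close>\<close>

text \<open>Every \<open>E\<^sub>i\<close> lies in the ideal generated by \<open>E\<^sub>1\<close>, since \<open>E\<^sub>i\<^sub>+\<^sub>1 = E\<^sub>i\<^sub>+\<^sub>1 E\<^sub>i E\<^sub>i\<^sub>+\<^sub>1\<close>.\<close>

lemma E_in_B1: "1 \<le> i \<Longrightarrow> i \<le> n - 1 \<Longrightarrow> in_B1 (G (E i))"
proof (induction i rule: nat_induct_at_least)
  case base
  have "in_B1 (Mul (Mul (Sc 1) (G (E 1))) (Sc 1))"
    by (rule inB1.gen) auto
  then show ?case
    by (rule inB1.resp) (rule bmw_trans, rule bmw_eq.mul_one_r, rule bmw_eq.mul_one_l)
next
  case (Suc i)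
  then have "in_B1 (Mul (Mul (G (E (i+1))) (G (E i))) (G (E (i+1))))"
    by (intro in_B1_Mul_left in_B1_Mul_right) auto
  moreover have "Mul (Mul (G (E (i+1))) (G (E i))) (G (E (i+1))) \<approx> G (E (i+1))"
    by (rule bmw_eq.EEE2) (use Suc in auto)
  ultimately show ?case
    by (simp add: inB1.resp)
qed

lemma T_cong_Tinv:
  assumes i: "1 \<le> i" "i \<le> n - 1"
  shows "G (T i) \<simeq> Add (Sc zpar) (G (Tinv i))"
proof -
  have E0: "G (E i) \<simeq> Sc 0"
    using E_in_B1[OF i] cong_B1_zero_iff by blast
  have "Sub (Sc 1) (G (E i)) \<simeq> Add (Sc 1) (Mul (Sc (-1)) (Sc 0))"
    by (rule cong_B1_Add, rule cong_B1_refl, rule cong_B1_Mul_left[OF E0], simp)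
  also have "\<dots> \<approx> Sc 1"
    using bmw_eq.sc_mul[of n m \<zeta> "-1" 0]
    by (auto intro: bmw_trans[OF Add_cong_right Add_zero_right])
  finally have one_minus_E: "Sub (Sc 1) (G (E i)) \<simeq> Sc 1" .
  have "G (T i) \<approx> Add (Sub (G (T i)) (G (Tinv i))) (G (Tinv i))"
  proof -
    have "Add (Sub (G (T i)) (G (Tinv i))) (G (Tinv i)) \<approx> Add (G (T i)) (Sub (G (Tinv i)) (G (Tinv i)))"
      by (rule bmw_trans, rule bmw_eq.add_assoc, rule Add_cong_right, rule bmw_eq.add_comm)
    also have "\<dots> \<approx> G (T i)"
      by (rule bmw_trans, rule Add_cong_right, rule bmw_eq.add_neg, rule Add_zero_right)
    finally show ?thesis by (rule bmw_sym)
  qed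
  also have "\<dots> \<approx> Add (Mul (Sc zpar) (Sub (Sc 1) (G (E i)))) (G (Tinv i))"
    by (rule Add_cong_left, rule bmw_eq.skein[OF i])
  also have "\<dots> \<simeq> Add (Mul (Sc zpar) (Sc 1)) (G (Tinv i))"
    by (rule cong_B1_Add, rule cong_B1_Mul_left[OF one_minus_E], simp, rule cong_B1_refl)
  also have "\<dots> \<approx> Add (Sc zpar) (G (Tinv i))"
    using bmw_eq.sc_mul[of n m \<zeta> zpar 1] by (auto intro: Add_cong_left)
  finally show ?thesis .
qed

lemma Tinv_cong_T:
  assumes i: "1 \<le> i" "i \<le> n - 1"
  shows "G (Tinv i) \<simeq> Add (Sc (- zpar)) (G (T i))"
proof -
  have "Add (Sc (- zpar)) (G (T i)) \<simeq> Add (Sc (- zpar)) (Add (Sc zpar) (G (Tinv i)))"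
    by (rule cong_B1_Add, rule cong_B1_refl, rule T_cong_Tinv[OF i])
  also have "\<dots> \<approx> Add (Add (Sc (- zpar)) (Sc zpar)) (G (Tinv i))"
    by (rule bmw_sym, rule bmw_eq.add_assoc)
  also have "\<dots> \<approx> G (Tinv i)"
    using bmw_eq.sc_add[of n m \<zeta> "- zpar" zpar]
    by (auto intro: bmw_trans Add_cong_left bmw_eq.add_zero)
  finally show ?thesis
    by (rule cong_B1_sym)
qed

lemma T_sq_cong:
  assumes i: "1 \<le> i" "i \<le> n - 1"
  shows "Mul (G (T i)) (G (T i)) \<simeq> Add (Mul (Sc zpar) (G (T i))) (Sc 1)"
proof -
  have "Mul (G (T i)) (G (T i)) \<simeq> Mul (G (T i)) (Add (Sc zpar) (G (Tinv i)))"
    by (rule cong_B1_Mul_left, rule T_cong_Tinv[OF i]) (use i in simp)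
  also have "\<dots> \<approx> Add (Mul (G (T i)) (Sc zpar)) (Mul (G (T i)) (G (Tinv i)))"
    by (rule bmw_eq.distrib_l)
  also have "\<dots> \<approx> Add (Mul (Sc zpar) (G (T i))) (Sc 1)"
    by (rule bmw_eq.cong_add, rule bmw_sym, rule bmw_eq.sc_central, rule bmw_eq.inv_l[OF i])
  finally show ?thesis .
qed

end

section \<open>Words in the \<open>T\<^sub>i\<close> and linear combinations\<close>

fun Tword :: "nat list \<Rightarrow> 'k::field bexp" where
  "Tword [] = Sc 1"
| "Tword (i # u) = Mul (G (T i)) (Tword u)"

fun lincomb :: "('k::field \<times> 'a) list \<Rightarrow> ('a \<Rightarrow> 'k bexp) \<Rightarrow> 'k bexp" where
  "lincomb [] P = Sc 0"
| "lincomb ((c, k) # L) P = Add (Mul (Sc c) (P k)) (lincomb L P)"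

lemma lincomb_map_keys: "lincomb (map (\<lambda>(c, k). (c, f k)) L) P = lincomb L (P \<circ> f)"
  by (induction L) auto

context bmw_quotient
begin

definition word_ok :: "nat list \<Rightarrow> bool" where
  "word_ok u \<longleftrightarrow> set u \<subseteq> {1..<n}"

lemma word_ok_simps [simp]:
  "word_ok []"
  "word_ok (i # u) \<longleftrightarrow> 1 \<le> i \<and> i < n \<and> word_ok u"
  "word_ok (u @ v) \<longleftrightarrow> word_ok u \<and> word_ok v"
  by (auto simp: word_ok_def)

lemma wf_Tword: "word_ok u \<Longrightarrow> wf_bexp n (Tword u)"
  by (induction u) auto

lemma Tword_append: "Tword (u @ v) \<approx> Mul (Tword u) (Tword v)"
proof (induction u)
  case Nil
  show ?case by (simp, rule bmw_sym, rule bmw_eq.mul_one_l)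
next
  case (Cons i u)
  have "Tword ((i # u) @ v) \<approx> Mul (G (T i)) (Mul (Tword u) (Tword v))"
    by (simp, rule Mul_cong_right, rule Cons)
  also have "\<dots> \<approx> Mul (Tword (i # u)) (Tword v)"
    by (simp, rule bmw_sym, rule bmw_eq.mul_assoc)
  finally show ?case .
qed

lemma Tword_snoc: "Tword (u @ [i]) \<approx> Mul (Tword u) (G (T i))"
  by (rule bmw_trans, rule Tword_append, rule Mul_cong_right, simp, rule bmw_eq.mul_one_r)

lemma Tword_infix_cong:
  assumes "Tword u \<approx> Tword v"
  shows "Tword (p @ u @ q) \<approx> Tword (p @ v @ q)"
proof -
  have "Tword (p @ u @ q) \<approx> Mul (Tword p) (Mul (Tword u) (Tword q))"
    by (rule bmw_trans, rule Tword_append, rule Mul_cong_right, rule Tword_append)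
  also have "\<dots> \<approx> Mul (Tword p) (Mul (Tword v) (Tword q))"
    by (rule Mul_cong_right, rule Mul_cong_left, rule assms)
  also have "\<dots> \<approx> Tword (p @ v @ q)"
    by (rule bmw_sym, rule bmw_trans, rule Tword_append, rule Mul_cong_right, rule Tword_append)
  finally show ?thesis .
qed

lemma Tword_pair: "Tword [a, b] \<approx> Mul (G (T a)) (G (T b))"
  by (simp, rule Mul_cong_right, rule bmw_eq.mul_one_r)

lemma Tword_triple: "Tword [a, b, c] \<approx> Mul (Mul (G (T a)) (G (T b))) (G (T c))"
  by (simp, rule bmw_trans, rule Mul_cong_right, rule Mul_cong_right, rule bmw_eq.mul_one_r,
      rule bmw_sym, rule bmw_eq.mul_assoc)

lemma Tword_braid: "1 \<le> i \<Longrightarrow> i + 1 \<le> n - 1 \<Longrightarrow> Tword [i, i + 1, i] \<approx> Tword [i + 1, i, i + 1]"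
  by (rule bmw_trans, rule Tword_triple, rule bmw_trans, rule bmw_eq.braid, assumption, assumption,
      rule bmw_sym, rule Tword_triple)

lemma Tword_commute:
  assumes "\<forall>b\<in>set B. a + 1 < b \<or> b + 1 < a" and "word_ok (a # B)"
  shows "Tword (B @ [a]) \<approx> Tword (a # B)"
  using assms
proof (induction B)
  case Nil
  show ?case by (simp, rule bmw_refl)
next
  case (Cons b B)
  have "Tword ([b] @ (B @ [a]) @ []) \<approx> Tword ([b] @ (a # B) @ [])"
    by (rule Tword_infix_cong, rule Cons.IH) (use Cons.prems in auto)
  also have "Tword ([b] @ (a # B) @ []) = Tword ([] @ [b, a] @ B)"
    by simp
  also have "\<dots> \<approx> Tword ([] @ [a, b] @ B)"
  proof (rule Tword_infix_cong)
    have ab: "1 \<le> b" "b \<le> n - 1" "1 \<le> a" "a \<le> n - 1" "b + 1 < a \<or> a + 1 < b"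
      using Cons.prems by auto
    show "Tword [b, a] \<approx> Tword [a, b]"
      by (rule bmw_trans[OF Tword_pair bmw_trans[OF bmw_eq.far_comm[OF ab] bmw_sym[OF Tword_pair]]])
  qed
  finally show ?case by simp
qed

lemma Tword_sq_cong:
  assumes "word_ok p" "1 \<le> i" "i \<le> n - 1"
  shows "Tword (p @ [i, i]) \<simeq> Add (Mul (Sc zpar) (Tword (p @ [i]))) (Tword p)"
proof -
  have "Tword (p @ [i, i]) \<approx> Mul (Tword p) (Mul (G (T i)) (G (T i)))"
    by (rule bmw_trans, rule Tword_append, rule Mul_cong_right, rule Tword_pair)
  also have "\<dots> \<simeq> Mul (Tword p) (Add (Mul (Sc zpar) (G (T i))) (Sc 1))"
    by (rule cong_B1_Mul_left, rule T_sq_cong, fact, fact, rule wf_Tword, fact)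
  also have "\<dots> \<approx> Add (Mul (Tword p) (Mul (Sc zpar) (G (T i)))) (Mul (Tword p) (Sc 1))"
    by (rule bmw_eq.distrib_l)
  also have "\<dots> \<approx> Add (Mul (Sc zpar) (Tword (p @ [i]))) (Tword p)"
  proof (rule bmw_eq.cong_add)
    have "Mul (Tword p) (Mul (Sc zpar) (G (T i))) \<approx> Mul (Mul (Sc zpar) (Tword p)) (G (T i))"
      by (rule bmw_trans, rule bmw_sym, rule bmw_eq.mul_assoc, rule Mul_cong_left, rule bmw_sym,
          rule bmw_eq.sc_central)
    also have "\<dots> \<approx> Mul (Sc zpar) (Tword (p @ [i]))"
      by (rule bmw_trans, rule bmw_eq.mul_assoc, rule Mul_cong_right, rule bmw_sym, rule Tword_snoc)
    finally show "Mul (Tword p) (Mul (Sc zpar) (G (T i))) \<approx> Mul (Sc zpar) (Tword (p @ [i]))" .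
  qed (rule bmw_eq.mul_one_r)
  finally show ?thesis .
qed

lemma lincomb_single: "P k \<approx> lincomb [(1, k)] P"
  by (simp, rule bmw_sym, rule bmw_trans, rule Add_zero_right, rule bmw_eq.mul_one_l)

lemma lincomb_append: "lincomb (L @ M) P \<approx> Add (lincomb L P) (lincomb M P)"
proof (induction L)
  case Nil
  show ?case by (simp, rule bmw_sym, rule bmw_eq.add_zero)
next
  case (Cons a L)
  obtain c k where a: "a = (c, k)" by force
  show ?case
    by (simp add: a, rule bmw_trans, rule Add_cong_right, rule Cons.IH, rule bmw_sym,
        rule bmw_eq.add_assoc)
qed

lemma lincomb_scale: "Mul (Sc c) (lincomb L P) \<approx> lincomb (map (\<lambda>(d, k). (c * d, k)) L) P"
proof (induction L)
  case Nil
  show ?case by (simp, rule Mul_zero_right)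
next
  case (Cons a L)
  obtain d k where a: "a = (d, k)" by force
  show ?case
    by (simp add: a, rule bmw_trans, rule bmw_eq.distrib_l, rule bmw_eq.cong_add, rule Mul_Sc_Sc,
        rule Cons.IH)
qed

lemma lincomb_Mul_right: "Mul (lincomb L P) t \<approx> lincomb L (\<lambda>k. Mul (P k) t)"
proof (induction L)
  case Nil
  show ?case by (simp, rule Mul_zero_left)
next
  case (Cons a L)
  obtain d k where a: "a = (d, k)" by force
  show ?case
    by (simp add: a, rule bmw_trans, rule bmw_eq.distrib_r, rule bmw_eq.cong_add,
        rule bmw_eq.mul_assoc, rule Cons.IH)
qed

lemma lincomb_cong: "(\<And>k. k \<in> snd ` set L \<Longrightarrow> P k \<approx> Q k) \<Longrightarrow> lincomb L P \<approx> lincomb L Q"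
proof (induction L)
  case Nil
  show ?case by (simp, rule bmw_refl)
next
  case (Cons a L)
  obtain d k where a: "a = (d, k)" by force
  show ?case
    using Cons.prems by (simp add: a, intro bmw_eq.cong_add Mul_cong_right Cons.IH) (auto simp: a)
qed

end

section \<open>The code words span modulo \<open>B\<^sup>(\<^sup>1\<^sup>)\<close>\<close>

text \<open>A code \<open>[s\<^sub>l, \<dots>, s\<^sub>1]\<close> with \<open>s\<^sub>j \<le> j\<close> stands for the word
  \<open>\<Prod>\<^sub>j T\<^sub>j T\<^sub>j\<^sub>-\<^sub>1 \<cdots> T\<^sub>j\<^sub>+\<^sub>1\<^sub>-\<^sub>s\<^sub>j\<close>; the \<open>n!\<close> codes of length \<open>n - 1\<close> give the standard
  basis of the Hecke algebra of the symmetric group.\<close>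

fun is_code :: "nat list \<Rightarrow> bool" where
  "is_code [] \<longleftrightarrow> True"
| "is_code (s # ss) \<longleftrightarrow> s \<le> length ss + 1 \<and> is_code ss"

fun code_word :: "nat list \<Rightarrow> nat list" where
  "code_word [] = []"
| "code_word (s # ss) = code_word ss @ rev [length ss + 2 - s..<length ss + 2]"

definition codes :: "nat \<Rightarrow> nat list set" where
  "codes l = {k. is_code k \<and> length k = l}"

abbreviation Tcode :: "nat list \<Rightarrow> 'k::field bexp" where
  "Tcode k \<equiv> Tword (code_word k)"

lemma set_code_word: "is_code ss \<Longrightarrow> x \<in> set (code_word ss) \<Longrightarrow> 1 \<le> x \<and> x \<le> length ss"
  by (induction ss) auto

lemma code_word_replicate_zero: "code_word (replicate l 0) = []"
  by (induction l) auto

lemma replicate_zero_in_codes: "replicate l 0 \<in> codes l"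
  unfolding codes_def by (induction l) auto

lemma rev_upt_snoc_pred: "0 < k \<Longrightarrow> k \<le> j \<Longrightarrow> rev [k..<j] @ [k - 1] = rev [k - 1..<j]"
  by (simp add: upt_conv_Cons)

lemma rev_upt_split_last: "k < j \<Longrightarrow> rev [k..<j] = rev [k + 1..<j] @ [k]"
  by (simp add: upt_conv_Cons)

lemma code_word_Cons: "j = length ss + 2 \<Longrightarrow> code_word (s # ss) = code_word ss @ rev [j - s..<j]"
  by simp

context bmw_quotient
begin

lemma word_ok_code_word: "is_code ss \<Longrightarrow> length ss \<le> n - 1 \<Longrightarrow> word_ok (code_word ss)"
  using set_code_word unfolding word_ok_def by fastforce

definition in_span :: "nat \<Rightarrow> 'k bexp \<Rightarrow> bool" where
  "in_span l x \<longleftrightarrow> (\<exists>L. snd ` set L \<subseteq> codes l \<and> x \<simeq> lincomb L Tcode)"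

lemma in_span_cong: "x \<simeq> y \<Longrightarrow> in_span l y \<Longrightarrow> in_span l x"
  unfolding in_span_def by (blast intro: cong_B1_trans)

lemma in_span_bmw_cong: "x \<approx> y \<Longrightarrow> in_span l y \<Longrightarrow> in_span l x"
  by (rule in_span_cong[OF cong_B1_if_bmw])

lemma in_span_zero: "in_span l (Sc 0)"
  unfolding in_span_def by (auto intro!: exI[of _ "[]"] cong_B1_refl)

lemma in_span_Tcode: "k \<in> codes l \<Longrightarrow> in_span l (Tcode k)"
  unfolding in_span_def by (auto intro!: exI[of _ "[(1, k)]"] cong_B1_if_bmw lincomb_single)

lemma in_span_Add: "in_span l x \<Longrightarrow> in_span l y \<Longrightarrow> in_span l (Add x y)"
proof -
  assume "in_span l x" "in_span l y"
  then obtain L M where L: "snd ` set L \<subseteq> codes l" "x \<simeq> lincomb L Tcode"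
    and M: "snd ` set M \<subseteq> codes l" "y \<simeq> lincomb M Tcode"
    unfolding in_span_def by blast
  have "Add x y \<simeq> lincomb (L @ M) Tcode"
    by (rule cong_B1_bmw_trans, rule cong_B1_Add, fact, fact, rule bmw_sym, rule lincomb_append)
  then show ?thesis
    unfolding in_span_def using L M by (intro exI[of _ "L @ M"]) auto
qed

lemma in_span_scale: "in_span l x \<Longrightarrow> in_span l (Mul (Sc c) x)"
proof -
  assume "in_span l x"
  then obtain L where L: "snd ` set L \<subseteq> codes l" "x \<simeq> lincomb L Tcode"
    unfolding in_span_def by blast
  have "Mul (Sc c) x \<simeq> lincomb (map (\<lambda>(d, k). (c * d, k)) L) Tcode"
    by (rule cong_B1_bmw_trans, rule cong_B1_Mul_left, fact, simp, rule lincomb_scale)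
  moreover have "snd ` set (map (\<lambda>(d, k). (c * d, k)) L) \<subseteq> codes l"
    using L(1) by force
  ultimately show ?thesis
    unfolding in_span_def by blast
qed

lemma in_span_Mul_Sc: "in_span l x \<Longrightarrow> in_span l (Mul x (Sc c))"
  by (rule in_span_bmw_cong, rule bmw_sym, rule bmw_eq.sc_central, rule in_span_scale)

lemma in_span_lincomb: "(\<And>k. k \<in> snd ` set L \<Longrightarrow> in_span l (P k)) \<Longrightarrow> in_span l (lincomb L P)"
proof (induction L)
  case (Cons a L)
  then show ?case
    by (cases a) (simp add: in_span_Add in_span_scale)
qed (simp add: in_span_zero)

lemma wf_Tcode: "k \<in> codes (n - 1) \<Longrightarrow> wf_bexp n (Tcode k)"
  by (intro wf_Tword word_ok_code_word) (auto simp: codes_def)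

lemma in_span_Mul_right:
  assumes x: "in_span l x" and t: "wf_bexp n t"
    and basis: "\<And>k. k \<in> codes l \<Longrightarrow> in_span l (Mul (Tcode k) t)"
  shows "in_span l (Mul x t)"
proof -
  obtain L where L: "snd ` set L \<subseteq> codes l" "x \<simeq> lincomb L Tcode"
    using x unfolding in_span_def by blast
  have "Mul x t \<simeq> lincomb L (\<lambda>k. Mul (Tcode k) t)"
    by (rule cong_B1_bmw_trans, rule cong_B1_Mul_right, fact, fact, rule lincomb_Mul_right)
  moreover have "in_span l (lincomb L (\<lambda>k. Mul (Tcode k) t))"
    using L(1) basis by (auto intro: in_span_lincomb)
  ultimately show ?thesis
    by (rule in_span_cong)
qed

lemma in_span_extend:
  assumes x: "in_span l x" and s: "s \<le> l + 1" and l: "l + 1 \<le> n - 1"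
  shows "in_span (l + 1) (Mul x (Tword (rev [l + 2 - s..<l + 2])))"
    (is "in_span _ (Mul x (Tword ?r))")
proof -
  obtain L where L: "snd ` set L \<subseteq> codes l" "x \<simeq> lincomb L Tcode"
    using x unfolding in_span_def by blast
  have "word_ok ?r"
    using s l by (auto simp: word_ok_def)
  then have "Mul x (Tword ?r) \<simeq> Mul (lincomb L Tcode) (Tword ?r)"
    by (intro cong_B1_Mul_right L wf_Tword)
  also have "\<dots> \<approx> lincomb L (\<lambda>k. Mul (Tcode k) (Tword ?r))"
    by (rule lincomb_Mul_right)
  also have "\<dots> \<approx> lincomb L (\<lambda>k. Tcode (s # k))"
  proof (rule lincomb_cong)
    fix k assume "k \<in> snd ` set L"
    then have "length k = l"
      using L(1) by (auto simp: codes_def)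
    then have "code_word (s # k) = code_word k @ ?r"
      by simp
    then show "Mul (Tcode k) (Tword ?r) \<approx> Tcode (s # k)"
      by (simp only:) (rule bmw_sym, rule Tword_append)
  qed
  also have "\<dots> = lincomb (map (\<lambda>(c, k). (c, s # k)) L) Tcode"
    by (simp add: lincomb_map_keys comp_def)
  finally have "Mul x (Tword ?r) \<simeq> lincomb (map (\<lambda>(c, k). (c, s # k)) L) Tcode" .
  moreover have "snd ` set (map (\<lambda>(c, k). (c, s # k)) L) \<subseteq> codes (l + 1)"
    using L(1) s by (force simp: codes_def)
  ultimately show ?thesis
    unfolding in_span_def by blast
qed

lemma Tword_rev_upt_commute:
  assumes "1 \<le> i" "i + 1 < k" "k \<le> j" "j \<le> n"
  shows "Tword (rev [k..<j] @ [i]) \<approx> Tword (i # rev [k..<j])"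
  by (rule Tword_commute) (use assms in \<open>auto simp: word_ok_def\<close>)

lemma Tword_rev_upt_braid:
  assumes "1 \<le> k" "k < i" "i < j" "j \<le> n"
  shows "Tword (rev [k..<j] @ [i]) \<approx> Tword ((i - 1) # rev [k..<j])"
proof -
  define A where "A = rev [i + 1..<j]"
  define B where "B = rev [k..<i - 1]"
  have "[k..<j] = [k..<i - 1] @ [i - 1, i] @ [i + 1..<j]"
    using assms upt_add_eq_append[of k "i - 1" "j - (i - 1)"] upt_add_eq_append[of "i - 1" 2 "j - (i + 1)"]
    by (simp add: numeral_2_eq_2 upt_rec)
  then have split: "rev [k..<j] = A @ [i, i - 1] @ B"
    by (simp add: A_def B_def)
  have A: "\<forall>b\<in>set A. i - 1 + 1 < b \<or> b + 1 < i - 1" "word_ok A"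
    and B: "\<forall>b\<in>set B. i + 1 < b \<or> b + 1 < i" "word_ok B"
    using assms by (auto simp: A_def B_def word_ok_def)
  have "Tword (rev [k..<j] @ [i]) = Tword ((A @ [i, i - 1]) @ (B @ [i]) @ [])"
    by (simp add: split)
  also have "\<dots> \<approx> Tword ((A @ [i, i - 1]) @ (i # B) @ [])"
    by (rule Tword_infix_cong, rule Tword_commute) (use assms B in auto)
  also have "\<dots> = Tword (A @ [i, i - 1, i] @ B)"
    by simp
  also have "\<dots> \<approx> Tword (A @ [i - 1, i, i - 1] @ B)"
  proof -
    have "Tword [i - 1, i, i - 1] \<approx> Tword [i, i - 1, i]"
      using Tword_braid[of "i - 1"] assms by simp
    then show ?thesis
      by (rule Tword_infix_cong[OF bmw_sym])
  qed
  also have "\<dots> = Tword ([] @ (A @ [i - 1]) @ ([i, i - 1] @ B))"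
    by simp
  also have "\<dots> \<approx> Tword ([] @ ((i - 1) # A) @ ([i, i - 1] @ B))"
    by (rule Tword_infix_cong, rule Tword_commute) (use assms A in auto)
  finally show ?thesis
    by (simp add: split)
qed

lemma in_span_code_step:
  assumes ss: "is_code (s # ss)" "length (s # ss) \<le> n - 1" and j: "j = length ss + 2"
    and moved: "Tword (rev [j - s..<j] @ [i]) \<approx> Tword (i' # rev [j - s..<j])"
    and prefix: "in_span (length ss) (Tword (code_word ss @ [i']))"
  shows "in_span (length (s # ss)) (Tword (code_word (s # ss) @ [i]))"
proof -
  let ?r = "rev [j - s..<j]"
  have "Tword (code_word (s # ss) @ [i]) = Tword (code_word ss @ (?r @ [i]) @ [])"
    by (simp only: code_word_Cons[OF j] append_assoc append_Nil2)
  also have "\<dots> \<approx> Tword (code_word ss @ (i' # ?r) @ [])"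
    by (rule Tword_infix_cong[OF moved])
  also have "\<dots> = Tword ((code_word ss @ [i']) @ ?r)"
    by (simp only: append_assoc append_Cons append_Nil append_Nil2)
  also have "\<dots> \<approx> Mul (Tword (code_word ss @ [i'])) (Tword ?r)"
    by (rule Tword_append)
  finally have moved_front: "Tword (code_word (s # ss) @ [i]) \<approx> Mul (Tword (code_word ss @ [i'])) (Tword ?r)" .
  have "in_span (length ss + 1) (Mul (Tword (code_word ss @ [i'])) (Tword ?r))"
    unfolding j using ss by (intro in_span_extend[OF prefix]) auto
  then show ?thesis
    unfolding length_Cons Suc_eq_plus1 by (rule in_span_bmw_cong[OF moved_front])
qed

lemma in_span_code_prolong:
  assumes ss: "is_code (s # ss)" "length (s # ss) \<le> n - 1" and j: "j = length ss + 2"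
    and i: "1 \<le> i" "i + 1 = j - s"
  shows "in_span (length (s # ss)) (Tword (code_word (s # ss) @ [i]))"
proof -
  have "j - (s + 1) = i"
    using i by linarith
  then have "code_word (s # ss) @ [i] = code_word ss @ rev [j - (s + 1)..<j]"
    using rev_upt_snoc_pred[of "j - s" j] i code_word_Cons[OF j] by simp
  also have "\<dots> = code_word ((s + 1) # ss)"
    by (rule code_word_Cons[OF j, symmetric])
  finally have "Tword (code_word (s # ss) @ [i]) = Tcode ((s + 1) # ss)"
    by (rule arg_cong)
  moreover have "(s + 1) # ss \<in> codes (length (s # ss))"
    using ss i j by (auto simp: codes_def)
  ultimately show ?thesis
    by (metis in_span_Tcode)
qed

lemma in_span_code_cancel:
  assumes ss: "is_code (s # ss)" "length (s # ss) \<le> n - 1" and j: "j = length ss + 2"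
    and i: "1 \<le> i" "i < j" "i = j - s"
  shows "in_span (length (s # ss)) (Tword (code_word (s # ss) @ [i]))"
proof -
  let ?p = "code_word ((s - 1) # ss)"
  have "j - (s - 1) = i + 1"
    using i by linarith
  then have "rev [j - s..<j] = rev [j - (s - 1)..<j] @ [i]"
    using rev_upt_split_last[of "j - s" j] i by simp
  then have p: "code_word (s # ss) = ?p @ [i]"
    by (simp only: code_word_Cons[OF j] code_word_Cons[OF j, of "s - 1"] append_assoc)
  have "word_ok ?p"
    using ss by (intro word_ok_code_word) auto
  then have "Tword (?p @ [i, i]) \<simeq> Add (Mul (Sc zpar) (Tword (?p @ [i]))) (Tword ?p)"
    using ss i j by (intro Tword_sq_cong) auto
  then have "Tword (code_word (s # ss) @ [i]) \<simeq>
      Add (Mul (Sc zpar) (Tcode (s # ss))) (Tcode ((s - 1) # ss))"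
    by (simp only: p append_assoc append_Cons append_Nil)
  moreover have "s # ss \<in> codes (length (s # ss))" "(s - 1) # ss \<in> codes (length (s # ss))"
    using ss by (auto simp: codes_def)
  ultimately show ?thesis
    by (blast intro: in_span_cong in_span_Add in_span_scale in_span_Tcode)
qed

text \<open>The four cases are the standard reduction of \<open>T\<^sub>w T\<^sub>i\<close> for a distinguished coset
  representative \<open>w\<close>: \<open>T\<^sub>i\<close> commutes or braids past the last run, prolongs it, or cancels
  against its last letter by the quadratic relation.\<close>

lemma in_span_Tcode_snoc:
  assumes "is_code ss" "length ss \<le> n - 1" "1 \<le> i" "i \<le> length ss"
  shows "in_span (length ss) (Tword (code_word ss @ [i]))"
  using assms
proof (induction ss arbitrary: i)
  case Nil
  then show ?case by simp
next
  case (Cons s ss)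
  define j where "j = length ss + 2"
  have s: "s \<le> j - 1" and i: "i < j" and j: "j \<le> n"
    using Cons.prems by (auto simp: j_def)
  consider "i + 1 < j - s" | "i + 1 = j - s" | "i = j - s" | "j - s < i"
    by linarith
  then show ?case
  proof cases
    case 1
    show ?thesis
      by (rule in_span_code_step[OF Cons.prems(1,2) j_def Tword_rev_upt_commute Cons.IH])
        (use Cons.prems 1 s j in \<open>auto simp: j_def\<close>)
  next
    case 2
    show ?thesis
      by (rule in_span_code_prolong[OF Cons.prems(1,2) j_def Cons.prems(3) 2])
  next
    case 3
    show ?thesis
      by (rule in_span_code_cancel[OF Cons.prems(1,2) j_def Cons.prems(3) i 3])
  next
    case 4
    show ?thesis
      by (rule in_span_code_step[OF Cons.prems(1,2) j_def Tword_rev_upt_braid Cons.IH])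
        (use Cons.prems 4 s i j in \<open>auto simp: j_def\<close>)
  qed
qed

lemma in_span_Mul_T:
  assumes "in_span (n - 1) x" "1 \<le> i" "i \<le> n - 1"
  shows "in_span (n - 1) (Mul x (G (T i)))"
proof (rule in_span_Mul_right[OF assms(1)])
  fix k assume "k \<in> codes (n - 1)"
  then show "in_span (n - 1) (Mul (Tcode k) (G (T i)))"
    using in_span_Tcode_snoc[of k i] assms
    by (auto simp: codes_def intro: in_span_bmw_cong bmw_sym[OF Tword_snoc])
qed (use assms in simp)

lemma in_span_Mul_Tinv:
  assumes "in_span (n - 1) x" and i: "1 \<le> i" "i \<le> n - 1"
  shows "in_span (n - 1) (Mul x (G (Tinv i)))"
proof (rule in_span_Mul_right[OF assms(1)])
  fix k assume k: "k \<in> codes (n - 1)"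
  have "Mul (Tcode k) (G (Tinv i)) \<simeq> Mul (Tcode k) (Add (Sc (- zpar)) (G (T i)))"
    by (rule cong_B1_Mul_left[OF Tinv_cong_T[OF i] wf_Tcode[OF k]])
  also have "\<dots> \<approx> Add (Mul (Tcode k) (Sc (- zpar))) (Mul (Tcode k) (G (T i)))"
    by (rule bmw_eq.distrib_l)
  finally show "in_span (n - 1) (Mul (Tcode k) (G (Tinv i)))"
    using k i by (blast intro: in_span_cong in_span_Add in_span_Mul_Sc in_span_Mul_T in_span_Tcode)
qed (use i in simp)

lemma in_span_Mul_E:
  assumes "in_span (n - 1) x" and i: "1 \<le> i" "i \<le> n - 1"
  shows "in_span (n - 1) (Mul x (G (E i)))"
proof (rule in_span_Mul_right[OF assms(1)])
  fix k assume "k \<in> codes (n - 1)"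
  then have "in_B1 (Mul (Tcode k) (G (E i)))"
    by (intro in_B1_Mul_left E_in_B1 i wf_Tcode)
  then show "in_span (n - 1) (Mul (Tcode k) (G (E i)))"
    by (simp add: cong_B1_zero_iff[symmetric] in_span_cong[OF _ in_span_zero])
qed (use i in simp)

lemma in_span_Mul:
  assumes "wf_bexp n y" "in_span (n - 1) x"
  shows "in_span (n - 1) (Mul x y)"
  using assms
proof (induction y arbitrary: x)
  case (Sc c)
  then show ?case
    by (simp add: in_span_Mul_Sc)
next
  case (G g)
  show ?case
  proof (cases g)
    case (T i)
    show ?thesis
      unfolding T by (intro in_span_Mul_T) (use G T in auto)
  next
    case (Tinv i)
    show ?thesis
      unfolding Tinv by (intro in_span_Mul_Tinv) (use G Tinv in auto)
  next
    case (E i)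
    show ?thesis
      unfolding E by (intro in_span_Mul_E) (use G E in auto)
  qed
next
  case (Add a b)
  then have "in_span (n - 1) (Add (Mul x a) (Mul x b))"
    by (simp add: in_span_Add)
  then show ?case
    by (rule in_span_bmw_cong[OF bmw_eq.distrib_l])
next
  case (Mul a b)
  then have "in_span (n - 1) (Mul (Mul x a) b)"
    by simp
  then show ?case
    by (rule in_span_bmw_cong[OF bmw_sym[OF bmw_eq.mul_assoc]])
qed

lemma in_span_if_wf: "wf_bexp n x \<Longrightarrow> in_span (n - 1) x"
  using in_span_Mul[OF _ in_span_Tcode[OF replicate_zero_in_codes]]
  by (simp add: code_word_replicate_zero in_span_bmw_cong[OF bmw_sym[OF bmw_eq.mul_one_l]])

end

section \<open>The action on vectors supported on words with distinct small letters\<close>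

definition swap_at :: "nat \<Rightarrow> nat list \<Rightarrow> nat list" where
  "swap_at i w = w[i - 1 := w ! i, i := w ! (i - 1)]"

lemma swap_at_split: "length pre = i - 1 \<Longrightarrow> 1 \<le> i \<Longrightarrow> swap_at i (pre @ x # y # suf) = pre @ y # x # suf"
  by (cases i) (auto simp: swap_at_def nth_append list_update_append)

lemma swap_at_swap_at: "1 \<le> i \<Longrightarrow> i < length w \<Longrightarrow> swap_at i (swap_at i w) = w"
  by (auto simp: swap_at_def nth_list_update list_eq_iff_nth_eq)

lemma nth_split: "length pre = i - 1 \<Longrightarrow> 1 \<le> i \<Longrightarrow>
    (pre @ x # y # suf) ! (i - 1) = x \<and> (pre @ x # y # suf) ! i = y"
  by (cases i) (auto simp: nth_append)

lemma split_at_two: "i + 1 < length w \<Longrightarrow> \<exists>pre x y suf. w = pre @ x # y # suf \<and> length pre = i"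
proof -
  assume a: "i + 1 < length w"
  then have "w = take i w @ w ! i # w ! (i + 1) # drop (i + 2) w"
    by (simp add: Cons_nth_drop_Suc)
  moreover have "length (take i w) = i"
    using a by simp
  ultimately show ?thesis
    by blast
qed

lemma sum_sum_delta:
  "finite A \<Longrightarrow> finite B \<Longrightarrow>
   (\<Sum>a\<in>A. \<Sum>b\<in>B. if a = d \<and> b = c \<and> P then f a b else 0) =
   (if d \<in> A \<and> c \<in> B \<and> P then f d c else (0::'a::comm_monoid_add))"
proof -
  assume f: "finite A" "finite B"
  have "(\<Sum>b\<in>B. if a = d \<and> b = c \<and> P then f a b else 0) = (if a = d then if c \<in> B \<and> P then f a c else 0 else 0)" for a
    using f(2) by (cases "a = d \<and> P") (auto simp: sum.delta')
  then show ?thesis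
    using f(1) by (simp add: sum.delta')
qed

context bmw_quotient
begin

text \<open>For letters in \<open>{1..m}\<close> the conjugate letter \<open>i' = 2m + 1 - i\<close> exceeds \<open>m\<close>, so on
  words with distinct such letters \<open>\<gamma>'\<close> vanishes and \<open>\<beta>'\<close> only swaps two positions (plus a
  diagonal term). These words exist because \<open>n \<le> m\<close>.\<close>

definition good_word :: "nat list \<Rightarrow> bool" where
  "good_word w \<longleftrightarrow> length w = n \<and> distinct w \<and> set w \<subseteq> {1..m}"

definition good_vec :: "(nat list \<Rightarrow> 'k) \<Rightarrow> bool" where
  "good_vec v \<longleftrightarrow> (\<forall>w. \<not> good_word w \<longrightarrow> v w = 0)"

lemma good_word_in_tbasis: "good_word w \<Longrightarrow> w \<in> tbasis n m"
  unfolding good_word_def tbasis_def by auto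

lemma good_word_swap_at: "1 \<le> i \<Longrightarrow> i < n \<Longrightarrow> length w = n \<Longrightarrow> good_word (swap_at i w) = good_word w"
  unfolding good_word_def swap_at_def by simp

lemma good_word_update:
  assumes "good_word (w[i - 1 := a, i := b])" "1 \<le> i" "i < length w"
  shows "a \<in> {1..m}" "b \<in> {1..m}" "a \<noteq> b"
proof -
  let ?u = "w[i - 1 := a, i := b]"
  have u: "?u ! (i - 1) = a" "?u ! i = b" "i - 1 < length ?u" "i < length ?u"
    using assms by (auto simp: nth_list_update)
  then show "a \<in> {1..m}" "b \<in> {1..m}"
    using assms(1) nth_mem[of "i - 1" ?u] nth_mem[of i ?u] unfolding good_word_def by auto
  show "a \<noteq> b"
    using assms(1,2) u nth_eq_iff_index_eq[of ?u "i - 1" i] unfolding good_word_def by auto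
qed

lemma beta_c_small_letters:
  assumes "a \<in> {1..m}" "b \<in> {1..m}" "a \<noteq> b"
  shows "beta_c m \<zeta> c d a b =
    (if a = d \<and> b = c \<and> c \<noteq> d \<and> c \<noteq> pr m d then 1 else 0) + (if a = c \<and> b = d \<and> c < d then zpar else 0)"
proof -
  have "pr m b \<noteq> a" "pr m a \<noteq> b"
    using assms by (auto simp: pr_def)
  then show ?thesis
    unfolding beta_c_def using assms by auto
qed

lemma gamma_c_small_letters: "a \<in> {1..m} \<Longrightarrow> b \<in> {1..m} \<Longrightarrow> gamma_c m \<zeta> c d a b = 0"
  by (auto simp: gamma_c_def pr_def)

lemma beta_c_good_vec:
  assumes v: "good_vec v" and w: "length w = n" and i: "1 \<le> i" "i < n"
  shows "beta_c m \<zeta> (w ! (i - 1)) (w ! i) a b * v (w[i - 1 := a, i := b]) =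
    (if a = w ! i \<and> b = w ! (i - 1) \<and> w ! (i - 1) \<noteq> w ! i \<and> w ! (i - 1) \<noteq> pr m (w ! i)
     then v (w[i - 1 := a, i := b]) else 0)
  + (if a = w ! (i - 1) \<and> b = w ! i \<and> w ! (i - 1) < w ! i then zpar * v (w[i - 1 := a, i := b]) else 0)"
proof (cases "good_word (w[i - 1 := a, i := b])")
  case False
  then have "v (w[i - 1 := a, i := b]) = 0"
    using v by (simp add: good_vec_def)
  then show ?thesis
    by (simp only: mult_zero_right if_cancel add.right_neutral)
next
  case True
  then show ?thesis
    using good_word_update[OF True] i w by (simp add: beta_c_small_letters distrib_right)
qed

lemma gamma_c_good_vec:
  assumes v: "good_vec v" and w: "length w = n" and i: "1 \<le> i" "i < n"
  shows "gamma_c m \<zeta> (w ! (i - 1)) (w ! i) a b * v (w[i - 1 := a, i := b]) = 0"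
proof (cases "good_word (w[i - 1 := a, i := b])")
  case False
  then show ?thesis
    using v by (simp add: good_vec_def)
next
  case True
  then show ?thesis
    using good_word_update[OF True] i w by (simp add: gamma_c_small_letters)
qed

lemma E_act_good_vec:
  assumes v: "good_vec v" and i: "1 \<le> i" "i < n"
  shows "gen_act n m \<zeta> (E i) v = (\<lambda>w. 0)"
proof
  fix w
  show "gen_act n m \<zeta> (E i) v w = 0"
  proof (cases "w \<in> tbasis n m")
    case True
    then have "length w = n"
      by (simp add: tbasis_def)
    then have "(\<Sum>a\<in>{1..2 * m}. \<Sum>b\<in>{1..2 * m}.
        gamma_c m \<zeta> (w ! (i - 1)) (w ! i) a b * v (w[i - 1 := a, i := b])) = 0"
      by (intro sum.neutral ballI gamma_c_good_vec[OF v _ i])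
    then show ?thesis
      using True by (simp add: two_site_def)
  qed (simp add: two_site_def)
qed

lemma T_act_good_vec:
  assumes v: "good_vec v" and i: "1 \<le> i" "i < n"
  shows "gen_act n m \<zeta> (T i) v w =
    (if good_word w then v (swap_at i w) + (if w ! (i - 1) < w ! i then zpar * v w else 0) else 0)"
proof (cases "w \<in> tbasis n m")
  case False
  then show ?thesis
    using good_word_in_tbasis by (auto simp: two_site_def)
next
  case True
  then have w: "length w = n" and "set w \<subseteq> {1..2 * m}"
    by (auto simp: tbasis_def)
  moreover have "w ! (i - 1) \<in> set w" "w ! i \<in> set w"
    using i w by auto
  ultimately have letters: "w ! (i - 1) \<in> {1..2 * m}" "w ! i \<in> {1..2 * m}"
    by auto
  have "gen_act n m \<zeta> (T i) v w = (\<Sum>a\<in>{1..2 * m}. \<Sum>b\<in>{1..2 * m}.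
      beta_c m \<zeta> (w ! (i - 1)) (w ! i) a b * v (w[i - 1 := a, i := b]))"
    unfolding gen_act.simps two_site_def using True by (simp only: if_True)
  also have "\<dots> = (if w ! (i - 1) \<noteq> w ! i \<and> w ! (i - 1) \<noteq> pr m (w ! i) then v (swap_at i w) else 0)
     + (if w ! (i - 1) < w ! i then zpar * v w else 0)"
    using letters
    by (simp only: beta_c_good_vec[OF v w i]) (simp add: sum.distrib sum_sum_delta swap_at_def)
  also have "\<dots> = (if good_word w then v (swap_at i w) + (if w ! (i - 1) < w ! i then zpar * v w else 0) else 0)"
  proof (cases "good_word w")
    case True
    then have "w ! (i - 1) \<noteq> w ! i"
      using i w unfolding good_word_def by (simp add: nth_eq_iff_index_eq)
    moreover have "w ! (i - 1) \<le> m" "w ! i \<le> m"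
      using True \<open>w ! (i - 1) \<in> set w\<close> \<open>w ! i \<in> set w\<close> unfolding good_word_def by auto
    ultimately show ?thesis
      using True by (auto simp: pr_def)
  next
    case False
    then have "v w = 0" "v (swap_at i w) = 0"
      using v good_word_swap_at[OF i w] by (auto simp: good_vec_def)
    then show ?thesis
      using False by simp
  qed
  finally show ?thesis .
qed

lemma T_act_split:
  assumes "good_vec v" "1 \<le> i" "i < n" "length pre = i - 1"
  shows "gen_act n m \<zeta> (T i) v (pre @ x # y # suf) =
    (if good_word (pre @ x # y # suf)
     then v (pre @ y # x # suf) + (if x < y then zpar * v (pre @ x # y # suf) else 0) else 0)"
  using T_act_good_vec[OF assms(1-3)] swap_at_split[OF assms(4,2)] nth_split[OF assms(4,2)] by simp

lemma Tinv_act_good_vec: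
  "good_vec v \<Longrightarrow> 1 \<le> i \<Longrightarrow> i < n \<Longrightarrow> gen_act n m \<zeta> (Tinv i) v = (\<lambda>w. gen_act n m \<zeta> (T i) v w - zpar * v w)"
  using E_act_good_vec by (simp add: fun_eq_iff)

lemma good_vec_T_act: "good_vec v \<Longrightarrow> 1 \<le> i \<Longrightarrow> i < n \<Longrightarrow> good_vec (gen_act n m \<zeta> (T i) v)"
  unfolding good_vec_def[of "gen_act n m \<zeta> (T i) v"] using T_act_good_vec by simp

lemma gen_act_add: "gen_act n m \<zeta> g (\<lambda>w. v w + v' w) w = gen_act n m \<zeta> g v w + gen_act n m \<zeta> g v' w"
  by (cases g) (simp_all add: two_site_def distrib_left sum.distrib algebra_simps)

lemma gen_act_scale: "gen_act n m \<zeta> g (\<lambda>w. c * v w) w = c * gen_act n m \<zeta> g v w"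
  by (cases g) (simp_all add: two_site_def sum_distrib_left algebra_simps)

lemma good_word_perm2: "good_word (pre @ y # x # suf) = good_word (pre @ x # y # suf)"
  unfolding good_word_def by auto

lemma good_word_perm3:
  "good_word (pre @ y # x # t # suf) = good_word (pre @ x # y # t # suf)"
  "good_word (pre @ x # t # y # suf) = good_word (pre @ x # y # t # suf)"
  "good_word (pre @ y # t # x # suf) = good_word (pre @ x # y # t # suf)"
  "good_word (pre @ t # x # y # suf) = good_word (pre @ x # y # t # suf)"
  "good_word (pre @ t # y # x # suf) = good_word (pre @ x # y # t # suf)"
  unfolding good_word_def by auto

lemma good_word_perm_far:
  "good_word (pre @ y # x # mid @ s # t # suf) = good_word (pre @ x # y # mid @ s # t # suf)"
  "good_word (pre @ x # y # mid @ t # s # suf) = good_word (pre @ x # y # mid @ s # t # suf)"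
  "good_word (pre @ y # x # mid @ t # s # suf) = good_word (pre @ x # y # mid @ s # t # suf)"
  unfolding good_word_def by auto

lemma T_act_quadratic:
  assumes v: "good_vec v" and i: "1 \<le> i" "i < n"
  shows "gen_act n m \<zeta> (T i) (gen_act n m \<zeta> (T i) v) w = zpar * gen_act n m \<zeta> (T i) v w + v w"
proof (cases "good_word w")
  case False
  then show ?thesis
    using T_act_good_vec[OF v i] T_act_good_vec[OF good_vec_T_act[OF v i] i] v by (simp add: good_vec_def)
next
  case True
  then obtain pre x y suf where w: "w = pre @ x # y # suf" "length pre = i - 1"
    using split_at_two[of "i - 1" w] i unfolding good_word_def by auto
  have "x \<noteq> y"
    using True w unfolding good_word_def by auto
  then show ?thesis
    using True unfolding w(1)
    by (simp only: T_act_split[OF good_vec_T_act[OF v i] i w(2)] T_act_split[OF v i w(2)])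
      (simp add: good_word_perm2)
qed

lemma T_act_braid:
  assumes v: "good_vec v" and i: "1 \<le> i" "i + 1 < n"
  shows "gen_act n m \<zeta> (T i) (gen_act n m \<zeta> (T (i + 1)) (gen_act n m \<zeta> (T i) v)) w
       = gen_act n m \<zeta> (T (i + 1)) (gen_act n m \<zeta> (T i) (gen_act n m \<zeta> (T (i + 1)) v)) w"
proof -
  have i': "i < n" "1 \<le> i + 1"
    using i by auto
  note good1 = good_vec_T_act[OF v i(1) i'(1)] good_vec_T_act[OF v i'(2) i(2)]
  note good2 = good_vec_T_act[OF good1(1) i'(2) i(2)] good_vec_T_act[OF good1(2) i(1) i'(1)]
  show ?thesis
  proof (cases "good_word w")
    case False
    then show ?thesis
      using T_act_good_vec[OF good2(1) i(1) i'(1)] T_act_good_vec[OF good2(2) i'(2) i(2)] by simp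
  next
    case True
    then obtain pre x y r where w: "w = pre @ x # y # r" "length pre = i - 1"
      using split_at_two[of "i - 1" w] i unfolding good_word_def by auto
    with True i obtain t suf where r: "r = t # suf"
      unfolding good_word_def by (cases r) auto
    have distinct: "x \<noteq> y \<and> y \<noteq> t \<and> x \<noteq> t"
      using True unfolding w r good_word_def by auto
    have F1: "gen_act n m \<zeta> (T i) u (pre @ a # b # c # suf) =
        (if good_word (pre @ a # b # c # suf)
         then u (pre @ b # a # c # suf) + (if a < b then zpar * u (pre @ a # b # c # suf) else 0) else 0)"
      if "good_vec u" for u a b c
      by (rule T_act_split[OF that i(1) i'(1) w(2)])
    have F2: "gen_act n m \<zeta> (T (i + 1)) u (pre @ a # b # c # suf) =
        (if good_word (pre @ a # b # c # suf)
         then u (pre @ a # c # b # suf) + (if b < c then zpar * u (pre @ a # b # c # suf) else 0) else 0)"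
      if "good_vec u" for u a b c
      using T_act_split[OF that i'(2) i(2), of "pre @ [a]" b c suf] w(2) i by simp
    show ?thesis
      using True distinct unfolding w(1) r
      by (simp only: F1[OF v] F1[OF good1(1)] F1[OF good1(2)] F1[OF good2(1)] F1[OF good2(2)]
          F2[OF v] F2[OF good1(1)] F2[OF good1(2)] F2[OF good2(1)] F2[OF good2(2)])
        (simp add: good_word_perm3 algebra_simps)
  qed
qed

lemma T_act_far_commute:
  assumes v: "good_vec v" and ij: "1 \<le> i" "i + 1 < j" "j < n"
  shows "gen_act n m \<zeta> (T i) (gen_act n m \<zeta> (T j) v) w = gen_act n m \<zeta> (T j) (gen_act n m \<zeta> (T i) v) w"
proof -
  have i: "1 \<le> i" "i < n" and j: "1 \<le> j" "j < n"
    using ij by auto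
  note good1 = good_vec_T_act[OF v i] good_vec_T_act[OF v j]
  show ?thesis
  proof (cases "good_word w")
    case False
    then show ?thesis
      using T_act_good_vec[OF good1(1) j] T_act_good_vec[OF good1(2) i] by simp
  next
    case True
    then obtain pre x y r where w: "w = pre @ x # y # r" "length pre = i - 1"
      using split_at_two[of "i - 1" w] ij unfolding good_word_def by auto
    then have "j - i - 2 + 1 < length r"
      using True ij unfolding good_word_def by auto
    then obtain mid s t suf where r: "r = mid @ s # t # suf" "length mid = j - i - 2"
      using split_at_two by blast
    have F1: "gen_act n m \<zeta> (T i) u (pre @ a # b # rest) =
        (if good_word (pre @ a # b # rest)
         then u (pre @ b # a # rest) + (if a < b then zpar * u (pre @ a # b # rest) else 0) else 0)"
      if "good_vec u" for u a b rest
      by (rule T_act_split[OF that i w(2)])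
    have F2: "gen_act n m \<zeta> (T j) u (pre @ a # b # mid @ s # t # suf) =
        (if good_word (pre @ a # b # mid @ s # t # suf)
         then u (pre @ a # b # mid @ t # s # suf)
              + (if s < t then zpar * u (pre @ a # b # mid @ s # t # suf) else 0) else 0)"
      if "good_vec u" for u a b
      using T_act_split[OF that j, of "pre @ a # b # mid" s t suf] w(2) r(2) ij by simp
    show ?thesis
      using True unfolding w(1) r(1)
      by (simp only: F1[OF v] F1[OF good1(1)] F1[OF good1(2)] F2[OF v] F2[OF good1(1)] F2[OF good1(2)])
        (simp add: good_word_perm_far algebra_simps)
  qed
qed

text \<open>Generators with an index outside \<open>1..n-1\<close> act trivially here, so that the action is
  defined on all expressions, also on the ill-indexed ones that may occur inside a derivation
  of \<open>bmw_eq\<close>.\<close>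

fun act_ext :: "'k bexp \<Rightarrow> (nat list \<Rightarrow> 'k) \<Rightarrow> (nat list \<Rightarrow> 'k)" where
  "act_ext (Sc c) v = (\<lambda>w. c * v w)"
| "act_ext (G g) v = (if 1 \<le> gidx g \<and> gidx g \<le> n - 1 then gen_act n m \<zeta> g v else v)"
| "act_ext (Add a b) v = (\<lambda>w. act_ext a v w + act_ext b v w)"
| "act_ext (Mul a b) v = act_ext b (act_ext a v)"

lemma act_ext_eq_act: "wf_bexp n x \<Longrightarrow> act_ext x v = act n m \<zeta> x v"
  by (induction x arbitrary: v) auto

lemma act_ext_add: "act_ext a (\<lambda>w. v w + v' w) = (\<lambda>w. act_ext a v w + act_ext a v' w)"
proof (induction a arbitrary: v v')
  case (G g)
  then show ?case by (auto simp: gen_act_add fun_eq_iff)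
qed (simp_all add: algebra_simps)

lemma act_ext_scale: "act_ext a (\<lambda>w. c * v w) = (\<lambda>w. c * act_ext a v w)"
proof (induction a arbitrary: v)
  case (G g)
  then show ?case by (auto simp: gen_act_scale fun_eq_iff)
qed (simp_all add: algebra_simps)

lemma gen_act_zero: "gen_act n m \<zeta> g (\<lambda>w. 0) = (\<lambda>w. 0)"
  using gen_act_scale[of g 0 "\<lambda>w. 0"] by (simp add: fun_eq_iff)

lemma good_vec_gen_act:
  assumes v: "good_vec v" and g: "1 \<le> gidx g" "gidx g \<le> n - 1"
  shows "good_vec (gen_act n m \<zeta> g v)"
proof (cases g)
  case (T i)
  then show ?thesis
    using good_vec_T_act[OF v] g by auto
next
  case (Tinv i)
  then have i: "1 \<le> i" "i < n"
    using g by auto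
  then show ?thesis
    unfolding Tinv Tinv_act_good_vec[OF v i] using good_vec_T_act[OF v i] v by (simp add: good_vec_def)
next
  case (E i)
  then show ?thesis
    using g E_act_good_vec[OF v] by (simp add: good_vec_def)
qed

lemma good_vec_act_ext: "good_vec v \<Longrightarrow> good_vec (act_ext a v)"
proof (induction a arbitrary: v)
  case (G g)
  then show ?case by (simp add: good_vec_gen_act)
qed (simp_all add: good_vec_def)

lemma gen_act_diff: "gen_act n m \<zeta> g (\<lambda>w. v w - c * v' w) w = gen_act n m \<zeta> g v w - c * gen_act n m \<zeta> g v' w"
  using gen_act_add[of g v "\<lambda>w. (- c) * v' w" w] gen_act_scale[of g "- c" v' w] by (simp del: gen_act.simps)

lemma gen_act_neg: "gen_act n m \<zeta> g (\<lambda>w. - v w) w = - gen_act n m \<zeta> g v w"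
  using gen_act_scale[of g "- 1" v w] by (simp del: gen_act.simps)

lemma act_ext_neg: "act_ext a (\<lambda>w. - v w) = (\<lambda>w. - act_ext a v w)"
  using act_ext_scale[of a "- 1" v] by simp

lemma act_ext_zero: "act_ext a (\<lambda>w. 0) = (\<lambda>w. 0)"
  using act_ext_scale[of a 0 "\<lambda>w. 0"] by simp

text \<open>The relations of \<open>B\<^sub>n\<close> hold on good vectors: there \<open>E\<^sub>i\<close> acts as zero, so only the
  Hecke relations for the \<open>T\<^sub>i\<close> have content.\<close>

lemma act_ext_bmw_cong: "a \<approx> b \<Longrightarrow> good_vec v \<Longrightarrow> act_ext a v = act_ext b v"
proof (induction arbitrary: v rule: bmw_eq.induct)
  case (cong_mul a a' b b')
  then show ?case
    using good_vec_act_ext by simp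
next
  case (distrib_r a b c)
  then show ?case
    by (simp add: act_ext_add)
next
  case (sc_central c a)
  then show ?case
    by (simp add: act_ext_scale)
next
  case (inv_l i)
  then have "1 \<le> i" "i < n"
    by auto
  then show ?case
    using inv_l Tinv_act_good_vec[OF good_vec_T_act] T_act_quadratic by (simp add: fun_eq_iff)
next
  case (inv_r i)
  then have i: "1 \<le> i" "i < n"
    by auto
  then show ?case
    using inv_r T_act_quadratic
    by (simp add: fun_eq_iff gen_act_diff Tinv_act_good_vec del: gen_act.simps)
next
  case (skein i)
  then have i: "1 \<le> i" "i < n"
    by auto
  then show ?case
    using skein
    by (simp add: fun_eq_iff algebra_simps gen_act_neg gen_act_scale Tinv_act_good_vec E_act_good_vec
        del: gen_act.simps)
next
  case (braid i)
  then show ?case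
    using T_act_braid by (simp add: fun_eq_iff)
next
  case (far_comm i j)
  then show ?case
    using T_act_far_commute[OF far_comm(6), of i j] T_act_far_commute[OF far_comm(6), of j i]
    by (auto simp: fun_eq_iff)
qed (auto simp: fun_eq_iff act_ext_neg gen_act_zero gen_act_scale E_act_good_vec good_vec_T_act
    simp del: gen_act.simps, auto simp: algebra_simps)

lemma act_ext_in_B1:
  assumes "2 \<le> n"
  shows "in_B1 b \<Longrightarrow> good_vec v \<Longrightarrow> act_ext b v = (\<lambda>w. 0)"
proof (induction arbitrary: v rule: inB1.induct)
  case (gen a b)
  have "gen_act n m \<zeta> (E 1) (act_ext a v) = (\<lambda>w. 0)"
    using assms by (intro E_act_good_vec good_vec_act_ext gen) auto
  moreover have "Suc 0 \<le> n - Suc 0"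
    using assms by simp
  ultimately show ?case
    by (simp add: act_ext_zero del: gen_act.simps)
next
  case (add a b)
  then show ?case
    by simp
next
  case (resp a b)
  then show ?case
    using act_ext_bmw_cong[OF bmw_sym[OF resp(2)]] by simp
qed

end

section \<open>Linear independence of the code words on \<open>V\<^sub>K\<^sup>\<otimes>\<^sup>n\<close>\<close>

fun inversions :: "nat list \<Rightarrow> nat" where
  "inversions [] = 0"
| "inversions (a # w) = length (filter (\<lambda>y. y < a) w) + inversions w"

lemma inversions_swap: "x < y \<Longrightarrow> inversions (pre @ y # x # suf) = inversions (pre @ x # y # suf) + 1"
  by (induction pre) auto

fun apply_swaps :: "nat list \<Rightarrow> nat list \<Rightarrow> nat list" where
  "apply_swaps u [] = u"
| "apply_swaps u (i # is) = apply_swaps (swap_at i u) is"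

fun ascending_swaps :: "nat list \<Rightarrow> nat list \<Rightarrow> bool" where
  "ascending_swaps u [] \<longleftrightarrow> True"
| "ascending_swaps u (i # is) \<longleftrightarrow> u ! (i - 1) < u ! i \<and> ascending_swaps (swap_at i u) is"

lemma apply_swaps_append: "apply_swaps u (xs @ ys) = apply_swaps (apply_swaps u xs) ys"
  by (induction xs arbitrary: u) auto

lemma ascending_swaps_append:
  "ascending_swaps u (xs @ ys) \<longleftrightarrow> ascending_swaps u xs \<and> ascending_swaps (apply_swaps u xs) ys"
  by (induction xs arbitrary: u) auto

text \<open>Moving a letter \<open>a\<close> leftwards past \<open>s\<close> smaller letters only ever swaps an ascent.\<close>

lemma move_left_rev_upt:
  assumes "\<forall>x\<in>set q. x < a" "s \<le> length q"
  shows "ascending_swaps (q @ a # rest) (rev [length q + 1 - s..<length q + 1]) \<and>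
    apply_swaps (q @ a # rest) (rev [length q + 1 - s..<length q + 1]) =
      take (length q - s) q @ a # drop (length q - s) q @ rest"
  using assms
proof (induction s arbitrary: q rest)
  case 0
  then show ?case by simp
next
  case (Suc s)
  then obtain q' b where q: "q = q' @ [b]"
    by (cases q rule: rev_cases) auto
  have run: "rev [length q + 1 - Suc s..<length q + 1] = (length q' + 1) # rev [length q' + 1 - s..<length q' + 1]"
    using Suc.prems q by (simp add: upt_Suc_append)
  have "swap_at (length q' + 1) (q' @ b # a # rest) = q' @ a # b # rest"
    "(q' @ b # a # rest) ! length q' = b" "(q' @ b # a # rest) ! (length q' + 1) = a"
    using swap_at_split[of q' "length q' + 1"] nth_split[of q' "length q' + 1"] by auto
  moreover have "b < a"
    using Suc.prems q by simp
  ultimately show ?case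
    using Suc.IH[of q' "b # rest"] Suc.prems q unfolding run by (simp del: upt_Suc)
qed

text \<open>Decoding of Lehmer codes: each entry \<open>s\<close> inserts the next larger letter so that
  exactly \<open>s\<close> letters follow it.\<close>

fun perm_of_code :: "nat list \<Rightarrow> nat list" where
  "perm_of_code [] = [1]"
| "perm_of_code (s # k) =
     take (length k + 1 - s) (perm_of_code k) @ (length k + 2) # drop (length k + 1 - s) (perm_of_code k)"

lemma perm_of_code_set_distinct:
  "set (perm_of_code k) = {1..<length k + 2} \<and> distinct (perm_of_code k)"
proof (induction k)
  case (Cons s k)
  let ?q = "perm_of_code k" and ?p = "length k + 1 - s"
  have "set (take ?p ?q) \<union> set (drop ?p ?q) = set ?q"
    by (metis append_take_drop_id set_append)
  moreover have "distinct (take ?p ?q @ drop ?p ?q)"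
    using Cons by simp
  moreover have "length k + 2 \<notin> set (take ?p ?q) \<union> set (drop ?p ?q)"
    using Cons calculation(1) by auto
  ultimately show ?case
    using Cons by (auto simp del: append_take_drop_id)
qed simp

lemma length_perm_of_code: "length (perm_of_code k) = length k + 1"
  using perm_of_code_set_distinct[of k] distinct_card[of "perm_of_code k"] by simp

lemma perm_of_code_inj:
  "is_code k \<Longrightarrow> is_code k' \<Longrightarrow> length k = length k' \<Longrightarrow> perm_of_code k = perm_of_code k' \<Longrightarrow> k = k'"
proof (induction k arbitrary: k')
  case (Cons s k)
  then obtain s' k'' where k': "k' = s' # k''"
    by (cases k') auto
  let ?q = "perm_of_code k" and ?q' = "perm_of_code k''" and ?a = "length k + 2"
  let ?p = "length k + 1 - s" and ?p' = "length k + 1 - s'"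
  have sets: "set ?q = {1..<?a}" "set ?q' = {1..<?a}"
    using perm_of_code_set_distinct[of k] perm_of_code_set_distinct[of k''] Cons.prems k' by auto
  have "?a \<notin> set (take ?p ?q)" "?a \<notin> set (drop ?p ?q)"
    using sets set_take_subset[of ?p ?q] set_drop_subset[of ?p ?q] by auto
  moreover have "take ?p ?q @ ?a # drop ?p ?q = take ?p' ?q' @ ?a # drop ?p' ?q'"
    using Cons.prems k' by simp
  ultimately have parts: "take ?p ?q = take ?p' ?q'" "drop ?p ?q = drop ?p' ?q'"
    by (simp_all add: append_Cons_eq_iff)
  then have "?q = ?q'"
    by (metis append_take_drop_id)
  moreover have "s = s'"
  proof -
    have bounds: "s \<le> length k + 1" "s' \<le> length k + 1" "length k'' = length k"
      using Cons.prems k' by auto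
    have "length (take ?p ?q) = length (take ?p' ?q')"
      using parts(1) by simp
    then have "?p = ?p'"
      using bounds by (simp add: length_perm_of_code)
    then show ?thesis
      using bounds by linarith
  qed
  moreover have "k = k''"
    using Cons.IH[of k''] Cons.prems k' \<open>?q = ?q'\<close> by simp
  ultimately show ?case
    using k' by simp
qed simp

definition coeff :: "('k::comm_monoid_add \<times> 'a) list \<Rightarrow> 'a \<Rightarrow> 'k" where
  "coeff L k = sum_list (map fst (filter (\<lambda>p. snd p = k) L))"

lemma coeff_Cons: "coeff ((c, k) # L) k' = (if k' = k then c else 0) + coeff L k'"
  by (auto simp: coeff_def)

lemma coeff_notin: "k \<notin> snd ` set L \<Longrightarrow> coeff L k = 0"
  by (induction L) (auto simp: coeff_def)

lemma sum_list_eq_sum_coeff: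
  "(\<Sum>(c, k)\<leftarrow>L. c * g k) = (\<Sum>k\<in>snd ` set L. coeff L k * (g k :: 'k::comm_ring))"
proof (induction L)
  case (Cons a L)
  obtain c k where a: "a = (c, k)"
    by force
  have "(\<Sum>k'\<in>insert k (snd ` set L). coeff ((c, k) # L) k' * g k')
      = c * g k + (\<Sum>k'\<in>insert k (snd ` set L). coeff L k' * g k')"
    by (simp add: coeff_Cons distrib_right sum.distrib if_distrib[of "\<lambda>x. x * _"] sum.delta cong: if_cong)
  also have "(\<Sum>k'\<in>insert k (snd ` set L). coeff L k' * g k') = (\<Sum>k'\<in>snd ` set L. coeff L k' * g k')"
    by (cases "k \<in> snd ` set L") (auto simp: coeff_notin insert_absorb)
  finally show ?case
    using Cons by (simp add: a)
qed simp

context bmw_quotient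
begin

lemma lincomb_filter_split:
  "lincomb L P \<approx> Add (lincomb (filter Q L) P) (lincomb (filter (\<lambda>p. \<not> Q p) L) P)"
proof (induction L)
  case Nil
  show ?case by (simp, rule bmw_sym, rule bmw_eq.add_zero)
next
  case (Cons a L)
  obtain c k where a: "a = (c, k)"
    by force
  let ?x = "Mul (Sc c) (P k)"
  let ?A = "lincomb (filter Q L) P" and ?B = "lincomb (filter (\<lambda>p. \<not> Q p) L) P"
  have "lincomb (a # L) P \<approx> Add ?x (Add ?A ?B)"
    by (simp add: a, rule Add_cong_right, rule Cons.IH)
  also have "\<dots> \<approx> Add (lincomb (filter Q (a # L)) P) (lincomb (filter (\<lambda>p. \<not> Q p) (a # L)) P)"
  proof (cases "Q a")
    case True
    then show ?thesis
      by (simp add: a) (rule bmw_sym, rule bmw_eq.add_assoc)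
  next
    case False
    have "Add ?x (Add ?A ?B) \<approx> Add (Add ?A ?x) ?B"
      by (rule bmw_trans, rule bmw_sym, rule bmw_eq.add_assoc, rule Add_cong_left, rule bmw_eq.add_comm)
    also have "\<dots> \<approx> Add ?A (Add ?x ?B)"
      by (rule bmw_eq.add_assoc)
    finally show ?thesis
      using False by (simp add: a)
  qed
  finally show ?case .
qed

lemma lincomb_single_key: "\<forall>p\<in>set L. snd p = k \<Longrightarrow> lincomb L P \<approx> Mul (Sc (sum_list (map fst L))) (P k)"
proof (induction L)
  case Nil
  show ?case by (simp, rule bmw_sym, rule Mul_zero_left)
next
  case (Cons a L)
  obtain c where a: "a = (c, k)"
    using Cons.prems by (cases a) auto
  have "lincomb (a # L) P \<approx> Add (Mul (Sc c) (P k)) (Mul (Sc (sum_list (map fst L))) (P k))"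
    using Cons by (simp add: a Add_cong_right)
  also have "\<dots> \<approx> Mul (Sc (c + sum_list (map fst L))) (P k)"
    by (rule Add_scalars_Mul)
  finally show ?case
    by (simp add: a)
qed

lemma lincomb_zero_if_coeff_zero: "(\<forall>k. coeff L k = 0) \<Longrightarrow> lincomb L P \<approx> Sc 0"
proof (induction "length L" arbitrary: L rule: less_induct)
  case less
  show ?case
  proof (cases L)
    case Nil
    then show ?thesis
      using bmw_refl by simp
  next
    case (Cons a L')
    define k where "k = snd a"
    let ?A = "filter (\<lambda>p. snd p = k) L" and ?B = "filter (\<lambda>p. snd p \<noteq> k) L"
    have "lincomb L P \<approx> Add (lincomb ?A P) (lincomb ?B P)"
      by (rule lincomb_filter_split)
    also have "\<dots> \<approx> Add (Mul (Sc (coeff L k)) (P k)) (Sc 0)"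
    proof (rule bmw_eq.cong_add)
      show "lincomb ?A P \<approx> Mul (Sc (coeff L k)) (P k)"
        unfolding coeff_def by (rule lincomb_single_key) auto
      have "length ?B < length L"
        using Cons k_def by (simp add: le_imp_less_Suc)
      moreover have "coeff ?B k' = 0" for k'
      proof (cases "k' = k")
        case True
        then show ?thesis
          by (simp add: coeff_def filter_filter)
      next
        case False
        then have "filter (\<lambda>p. snd p = k') ?B = filter (\<lambda>p. snd p = k') L"
          by (auto simp: filter_filter intro: filter_cong)
        then show ?thesis
          using less.prems by (simp add: coeff_def)
      qed
      ultimately show "lincomb ?B P \<approx> Sc 0"
        using less.hyps by blast
    qed
    also have "\<dots> \<approx> Sc 0"
      using less.prems by simp (rule bmw_trans, rule Add_zero_right, rule Mul_zero_left)
    finally show ?thesis .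
  qed
qed

lemma act_ext_lincomb: "act_ext (lincomb L P) v w = (\<Sum>(c, k)\<leftarrow>L. c * act_ext (P k) v w)"
  by (induction L) (auto simp: act_ext_scale)

definition has_leading_word :: "nat list \<Rightarrow> (nat list \<Rightarrow> 'k) \<Rightarrow> bool" where
  "has_leading_word u f \<longleftrightarrow> good_word u \<and> good_vec f \<and> f u = 1 \<and>
     (\<forall>w. w \<noteq> u \<longrightarrow> f w \<noteq> 0 \<longrightarrow> inversions w < inversions u)"

lemma leading_words_independent:
  assumes K: "finite K" and lead: "\<And>k. k \<in> K \<Longrightarrow> has_leading_word (ld k) (f k)"
    and inj: "inj_on ld K" and zero: "\<And>w. (\<Sum>k\<in>K. F k * f k w) = 0"
  shows "\<forall>k\<in>K. F k = 0"
proof (rule ccontr)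
  let ?S = "{k\<in>K. F k \<noteq> 0}"
  assume "\<not> (\<forall>k\<in>K. F k = 0)"
  then have S: "finite ?S" "?S \<noteq> {}"
    using K by auto
  then have "Max ((\<lambda>k. inversions (ld k)) ` ?S) \<in> (\<lambda>k. inversions (ld k)) ` ?S"
    by (intro Max_in) auto
  then obtain k0 where k0: "Max ((\<lambda>k. inversions (ld k)) ` ?S) = inversions (ld k0)" "k0 \<in> ?S"
    by (rule imageE)
  have max: "inversions (ld k) \<le> inversions (ld k0)" if "k \<in> ?S" for k
    unfolding k0(1)[symmetric] using S that by simp
  have others: "F k * f k (ld k0) = 0" if k: "k \<in> K - {k0}" for k
  proof (cases "F k = 0")
    case False
    then have "ld k0 \<noteq> ld k"
      using inj k k0(2) by (auto dest: inj_onD)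
    moreover have "\<not> inversions (ld k0) < inversions (ld k)"
      using max[of k] k False by simp
    ultimately have "f k (ld k0) = 0"
      using lead[of k] k unfolding has_leading_word_def by blast
    then show ?thesis
      by simp
  qed simp
  have "(\<Sum>k\<in>K - {k0}. F k * f k (ld k0)) = 0"
    using others by (rule sum.neutral[rule_format])
  then have "(\<Sum>k\<in>K. F k * f k (ld k0)) = F k0 * f k0 (ld k0)"
    using sum.remove[OF K, of k0 "\<lambda>k. F k * f k (ld k0)"] k0(2) by simp
  then have "F k0 * f k0 (ld k0) = 0"
    using zero by simp
  then show False
    using k0(2) lead[of k0] unfolding has_leading_word_def by simp
qed

lemma inversions_swap_at_le:
  assumes "good_word w" "1 \<le> i" "i < n"
  shows "inversions w \<le> inversions (swap_at i w) + 1"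
proof -
  obtain pre x y suf where w: "w = pre @ x # y # suf" "length pre = i - 1"
    using split_at_two[of "i - 1" w] assms unfolding good_word_def by auto
  have "x \<noteq> y"
    using assms(1) w unfolding good_word_def by auto
  then show ?thesis
    unfolding w(1) swap_at_split[OF w(2) assms(2)]
    using inversions_swap[of x y pre suf] inversions_swap[of y x pre suf] by (cases "x < y") auto
qed

lemma has_leading_word_T_act:
  assumes lead: "has_leading_word u f" and i: "1 \<le> i" "i < n" and asc: "u ! (i - 1) < u ! i"
  shows "has_leading_word (swap_at i u) (gen_act n m \<zeta> (T i) f)"
proof -
  have u: "good_word u" and f: "good_vec f" "f u = 1"
    and below: "\<And>w. w \<noteq> u \<Longrightarrow> f w \<noteq> 0 \<Longrightarrow> inversions w < inversions u"
    using lead unfolding has_leading_word_def by auto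
  obtain pre x y suf where split: "u = pre @ x # y # suf" "length pre = i - 1"
    using split_at_two[of "i - 1" u] i u unfolding good_word_def by auto
  have xy: "x < y"
    using asc nth_split[OF split(2) i(1)] split(1) by simp
  have su: "swap_at i u = pre @ y # x # suf"
    using swap_at_split[OF split(2) i(1)] split(1) by simp
  have length: "length u = n" "length (swap_at i u) = n"
    using u unfolding good_word_def swap_at_def by auto
  have good_su: "good_word (swap_at i u)"
    using good_word_swap_at[OF i length(1)] u by simp
  have inv: "inversions (swap_at i u) = inversions u + 1"
    using su split(1) inversions_swap[OF xy] by simp
  have "gen_act n m \<zeta> (T i) f (swap_at i u) = 1"
    using T_act_split[OF f(1) i split(2), of y x suf] good_su su xy f(2) split(1) by simp
  moreover have "inversions w < inversions (swap_at i u)"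
    if w: "w \<noteq> swap_at i u" "gen_act n m \<zeta> (T i) f w \<noteq> 0" for w
  proof -
    have gw: "good_word w"
      using w(2) T_act_good_vec[OF f(1) i, of w] by (auto split: if_splits)
    have "f (swap_at i w) \<noteq> 0 \<or> f w \<noteq> 0"
      using w(2) T_act_good_vec[OF f(1) i, of w] by (auto split: if_splits)
    then show ?thesis
    proof
      assume "f (swap_at i w) \<noteq> 0"
      moreover have "swap_at i w \<noteq> u"
        using w(1) swap_at_swap_at[OF i(1), of w] gw i unfolding good_word_def by auto
      ultimately have "inversions (swap_at i w) < inversions u"
        using below by blast
      then show ?thesis
        using inversions_swap_at_le[OF gw i] inv by linarith
    next
      assume "f w \<noteq> 0"
      then show ?thesis
        using below[of w] inv by (cases "w = u") auto
    qed
  qed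
  ultimately show ?thesis
    unfolding has_leading_word_def using good_su good_vec_T_act[OF f(1) i] by blast
qed

lemma has_leading_word_Tword:
  "has_leading_word u f \<Longrightarrow> word_ok is \<Longrightarrow> ascending_swaps u is \<Longrightarrow>
    has_leading_word (apply_swaps u is) (act_ext (Tword is) f)"
proof (induction "is" arbitrary: u f)
  case Nil
  then show ?case
    by (simp add: has_leading_word_def)
next
  case (Cons i "is")
  then have i: "1 \<le> i" "i < n"
    by auto
  have "has_leading_word (swap_at i u) (gen_act n m \<zeta> (T i) f)"
    using Cons.prems i by (intro has_leading_word_T_act) auto
  then have "has_leading_word (apply_swaps (swap_at i u) is) (act_ext (Tword is) (gen_act n m \<zeta> (T i) f))"
    using Cons by simp
  moreover have "i \<le> n - Suc 0"
    using i by simp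
  ultimately show ?case
    using i by (simp del: gen_act.simps)
qed

definition id_word :: "nat list" where
  "id_word = [1..<n + 1]"

lemma apply_swaps_code_word:
  assumes "is_code k" "length k \<le> n - 1" "1 \<le> n"
  shows "ascending_swaps id_word (code_word k) \<and>
    apply_swaps id_word (code_word k) = perm_of_code k @ [length k + 2..<n + 1]"
  unfolding id_word_def using assms
proof (induction k)
  case Nil
  then show ?case
    by (simp add: upt_rec)
next
  case (Cons s k)
  let ?q = "perm_of_code k" and ?a = "length k + 2"
  have q: "length ?q = length k + 1" "\<forall>x\<in>set ?q. x < ?a"
    using length_perm_of_code perm_of_code_set_distinct[of k] by auto
  have rest: "[?a..<n + 1] = ?a # [Suc ?a..<n + 1]"
    by (rule upt_conv_Cons) (use Cons.prems in simp)
  have "is_code k" "length k \<le> n - 1"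
    using Cons.prems by auto
  then have IH: "ascending_swaps [1..<n + 1] (code_word k)"
    "apply_swaps [1..<n + 1] (code_word k) = ?q @ ?a # [Suc ?a..<n + 1]"
    using Cons.IH Cons.prems(3) unfolding rest by auto
  have run: "code_word (s # k) = code_word k @ rev [length ?q + 1 - s..<length ?q + 1]"
    using q(1) by (simp add: numeral_2_eq_2 del: upt_Suc)
  have "s \<le> length ?q"
    using Cons.prems q(1) by simp
  then show ?case
    using move_left_rev_upt[OF q(2), of s "[Suc ?a..<n + 1]"] IH q(1)
    unfolding run apply_swaps_append ascending_swaps_append by (simp del: upt_Suc)
qed

definition unit_vec :: "nat list \<Rightarrow> nat list \<Rightarrow> 'k" where
  "unit_vec u = (\<lambda>w. if w = u then 1 else 0)"

lemma has_leading_word_unit_vec: "n \<le> m \<Longrightarrow> has_leading_word id_word (unit_vec id_word)"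
  unfolding has_leading_word_def good_word_def good_vec_def unit_vec_def id_word_def by auto

lemma lincomb_Tcode_zero_if_kills_unit_vec:
  assumes nm: "1 \<le> n" "n \<le> m" and L: "snd ` set L \<subseteq> codes (n - 1)"
    and kill: "act_ext (lincomb L Tcode) (unit_vec id_word) = (\<lambda>w. 0)"
  shows "lincomb L Tcode \<approx> Sc 0"
proof -
  let ?K = "snd ` set L" and ?ld = "\<lambda>k. apply_swaps id_word (code_word k)"
  have codes: "is_code k" "length k = n - 1" if "k \<in> ?K" for k
    using that L by (auto simp: codes_def)
  have lead: "has_leading_word (?ld k) (act_ext (Tcode k) (unit_vec id_word))" if "k \<in> ?K" for k
  proof (rule has_leading_word_Tword)
    show "word_ok (code_word k)"
      using codes[OF that] by (intro word_ok_code_word) auto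
    show "ascending_swaps id_word (code_word k)"
      using apply_swaps_code_word[of k] codes[OF that] nm by simp
  qed (rule has_leading_word_unit_vec[OF nm(2)])
  have "inj_on ?ld ?K"
  proof (rule inj_onI)
    fix k k' assume k: "k \<in> ?K" "k' \<in> ?K" "?ld k = ?ld k'"
    then have perm: "perm_of_code k = perm_of_code k'"
      using apply_swaps_code_word[of k] apply_swaps_code_word[of k'] codes[OF k(1)] codes[OF k(2)] nm
      by (simp del: upt_Suc)
    have "length k = length k'"
      using codes(2)[OF k(1)] codes(2)[OF k(2)] by simp
    then show "k = k'"
      by (rule perm_of_code_inj[OF codes(1)[OF k(1)] codes(1)[OF k(2)] _ perm])
  qed
  moreover have "(\<Sum>k\<in>?K. coeff L k * act_ext (Tcode k) (unit_vec id_word) w) = 0" for w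
    using fun_cong[OF kill, of w] by (simp add: act_ext_lincomb sum_list_eq_sum_coeff)
  ultimately have "\<forall>k\<in>?K. coeff L k = 0"
    using leading_words_independent[of ?K ?ld, OF _ lead] by blast
  then have "\<forall>k. coeff L k = 0"
    using coeff_notin[of _ L] by metis
  then show ?thesis
    by (rule lincomb_zero_if_coeff_zero)
qed

theorem annihilator_in_B1:
  assumes n: "2 \<le> n" "n \<le> m" and x: "wf_bexp n x" "in_Ann n m \<zeta> x"
  shows "in_B1 x"
proof -
  obtain L where L: "snd ` set L \<subseteq> codes (n - 1)" "x \<simeq> lincomb L Tcode"
    using in_span_if_wf[OF x(1)] unfolding in_span_def by blast
  then obtain b where b: "in_B1 b" "x \<approx> Add (lincomb L Tcode) b"
    unfolding cong_B1_def by blast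
  let ?v = "unit_vec id_word"
  have v: "good_vec ?v" "is_tvec n m ?v"
    using has_leading_word_unit_vec[OF n(2)] good_word_in_tbasis
    by (auto simp: has_leading_word_def good_vec_def is_tvec_def unit_vec_def)
  have "act_ext (lincomb L Tcode) ?v = act_ext x ?v"
    using act_ext_bmw_cong[OF b(2) v(1)] act_ext_in_B1[OF n(1) b(1) v(1)] by (simp add: fun_eq_iff)
  also have "\<dots> = (\<lambda>w. 0)"
    using x v(2) by (simp add: act_ext_eq_act in_Ann_def)
  finally have "lincomb L Tcode \<approx> Sc 0"
    using n L(1) by (intro lincomb_Tcode_zero_if_kills_unit_vec) auto
  then show ?thesis
    using L(2) cong_B1_zero_iff by (blast intro: cong_B1_bmw_trans)
qed

end

theorem lemma5p6:
  fixes \<zeta> :: "'k::field" and m n :: nat and x :: "'k bexp"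
  assumes "\<zeta> \<noteq> 0" and "m \<ge> n" and "n \<ge> 2"
    and "wf_bexp n x" and "in_Ann n m \<zeta> x"
  shows "inB1 n m \<zeta> x"
  using assms by (intro bmw_quotient.annihilator_in_B1) auto

end
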